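(* Let $\mathcal H$ be a complex Hilbert space, $T\in\mathcal B(\mathcal H)$, $T\neq0$, with polar decomposition $T=U|T|$. Let $\{x_n\}\subset\mathcal H$ with $\|x_n\|=1$ and $w(T)=\lim_{n\to\infty}|\langle Tx_n,x_n\rangle|$. Then for all $t\in[0,1]$, $$w(T)\le\frac{\|T\|^{1-t}}{2}\left(\big\||T|^t+|T^*|^t\big\|-\lim_{n\to\infty}\frac{\||T^*|^{t/2}x_n\|}{2\||T|^{t/2}x_n\|}\inf_{\lambda\in\mathbb C}\big\|(|T|^{t/2}-\lambda|T|^{t/2}U^* )x_n\big\|^2\right)\le\frac{\|T\|^{1-t}}{2}\big\||T|^t+|T^*|^t\big\|$$ (the limit being assumed to exist).
   Context: $\mathcal B(\mathcal H)$ is the algebra of bounded operators; $|T|=(T^*T)^{1/2}$, $|T^*|=(TT^* )^{1/2}$, powers via functional calculus with $|T|^0=I$; $T=U|T|$ is the polar decomposition with $U$ a partial isometry. $\|\cdot\|$ is the operator norm and $w(T)=\sup\{|\langle Tx,x\rangle|:\|x\|=1\}$ the numerical radius. *)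

theory Defs
  imports "HOL-Analysis.Analysis" "HOL-Computational_Algebra.Polynomial"
begin

class complex_normed_vector = real_normed_vector +
  fixes scaleC :: "complex \<Rightarrow> 'a \<Rightarrow> 'a" (infixr "*\<^sub>C" 75)
  assumes scaleC_add_right: "a *\<^sub>C (x + y) = a *\<^sub>C x + a *\<^sub>C y"
    and scaleC_add_left: "(a + b) *\<^sub>C x = a *\<^sub>C x + b *\<^sub>C x"
    and scaleC_scaleC: "a *\<^sub>C (b *\<^sub>C x) = (a * b) *\<^sub>C x"
    and scaleC_one: "1 *\<^sub>C x = x"
    and scaleC_of_real: "complex_of_real r *\<^sub>C x = scaleR r x"
    and norm_scaleC: "norm (a *\<^sub>C x) = cmod a * norm x"

class complex_inner = complex_normed_vector +
  fixes cinner :: "'a \<Rightarrow> 'a \<Rightarrow> complex"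
  assumes cinner_commute: "cinner x y = cnj (cinner y x)"
    and cinner_add_right: "cinner x (y + z) = cinner x y + cinner x z"
    and cinner_scaleC_right: "cinner x (a *\<^sub>C y) = a * cinner x y"
    and cinner_self_norm: "cinner x x = complex_of_real ((norm x)\<^sup>2)"

class chilbert_space = complex_inner + complete_space

instantiation complex :: chilbert_space
begin
definition scaleC_complex_def: "scaleC a (x::complex) = a * x"
definition cinner_complex_def: "cinner (x::complex) y = cnj x * y"
instance
proof
  fix a b :: complex and x y z :: complex and r :: real
  show "a *\<^sub>C (x + y) = a *\<^sub>C x + a *\<^sub>C y" by (simp add: scaleC_complex_def algebra_simps)
  show "(a + b) *\<^sub>C x = a *\<^sub>C x + b *\<^sub>C x" by (simp add: scaleC_complex_def algebra_simps)
  show "a *\<^sub>C (b *\<^sub>C x) = (a * b) *\<^sub>C x" by (simp add: scaleC_complex_def)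
  show "1 *\<^sub>C x = x" by (simp add: scaleC_complex_def)
  show "complex_of_real r *\<^sub>C x = scaleR r x" by (simp add: scaleC_complex_def scaleR_conv_of_real)
  show "norm (a *\<^sub>C x) = cmod a * norm x" by (simp add: scaleC_complex_def norm_mult)
  show "cinner x y = cnj (cinner y x)" by (simp add: cinner_complex_def)
  show "cinner x (y + z) = cinner x y + cinner x z" by (simp add: cinner_complex_def algebra_simps)
  show "cinner x (a *\<^sub>C y) = a * cinner x y" by (simp add: cinner_complex_def scaleC_complex_def)
  show "cinner x x = complex_of_real ((norm x)\<^sup>2)"
    unfolding cinner_complex_def complex_norm_square by (simp add: mult.commute)
qed
end

definition bop :: "('a::complex_normed_vector \<Rightarrow> 'a) \<Rightarrow> bool" where
  "bop T \<longleftrightarrow> bounded_linear T \<and> (\<forall>c x. T (c *\<^sub>C x) = c *\<^sub>C T x)"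

definition adj :: "('a::complex_inner \<Rightarrow> 'a) \<Rightarrow> 'a \<Rightarrow> 'a" where
  "adj T = (THE S. \<forall>x y. cinner (T x) y = cinner x (S y))"

definition numrad :: "('a::complex_inner \<Rightarrow> 'a) \<Rightarrow> real" where
  "numrad T = (SUP x \<in> {x. norm x = 1}. cmod (cinner (T x) x))"

definition poly_op :: "('a::complex_normed_vector \<Rightarrow> 'a) \<Rightarrow> real poly \<Rightarrow> 'a \<Rightarrow> 'a" where
  "poly_op A p x = (\<Sum>i\<le>degree p. complex_of_real (coeff p i) *\<^sub>C (A ^^ i) x)"

text \<open>For a positive operator \<open>A\<close> (spectrum in \<open>[0, \<parallel>A\<parallel>]\<close>) and \<open>f\<close> continuous on
  \<open>[0, \<parallel>A\<parallel>]\<close>, \<open>f(A)\<close> is the operator-norm limit of \<open>p\<^sub>n(A)\<close> for every sequence of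
  polynomials \<open>p\<^sub>n\<close> converging uniformly to \<open>f\<close> on \<open>[0, \<parallel>A\<parallel>]\<close>.\<close>
definition cfc :: "('a::complex_normed_vector \<Rightarrow> 'a) \<Rightarrow> (real \<Rightarrow> real) \<Rightarrow> 'a \<Rightarrow> 'a" where
  "cfc A f = (THE B. bop B \<and>
     (\<forall>P :: nat \<Rightarrow> real poly.
        uniform_limit {0..onorm A} (\<lambda>n s. poly (P n) s) f sequentially \<longrightarrow>
        (\<lambda>n. onorm (\<lambda>v. poly_op A (P n) v - B v)) \<longlonglongrightarrow> 0))"

text \<open>Power \<open>s\<^sup>t\<close> on \<open>[0,\<infinity>)\<close> with the convention \<open>s\<^sup>0 = 1\<close> (so \<open>A\<^sup>0 = I\<close>).\<close>
definition rpow :: "real \<Rightarrow> real \<Rightarrow> real" where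
  "rpow t s = (if t = 0 then 1 else s powr t)"

definition opow :: "('a::complex_normed_vector \<Rightarrow> 'a) \<Rightarrow> real \<Rightarrow> 'a \<Rightarrow> 'a" where
  "opow A t = cfc A (rpow t)"

definition absop :: "('a::complex_inner \<Rightarrow> 'a) \<Rightarrow> 'a \<Rightarrow> 'a" where
  "absop T = cfc (adj T \<circ> T) sqrt"

definition partial_isometry :: "('a::complex_inner \<Rightarrow> 'a) \<Rightarrow> bool" where
  "partial_isometry U \<longleftrightarrow> bop U \<and>
     (\<forall>x. (\<forall>y. U y = 0 \<longrightarrow> cinner y x = 0) \<longrightarrow> norm (U x) = norm x)"

definition polar_decomp :: "('a::complex_inner \<Rightarrow> 'a) \<Rightarrow> ('a \<Rightarrow> 'a) \<Rightarrow> bool" where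
  "polar_decomp T U \<longleftrightarrow> partial_isometry U \<and> T = U \<circ> absop T \<and>
     {x. U x = 0} = {x. T x = 0}"

end

theory Submission
  imports Defs "HOL-Computational_Algebra.Fundamental_Theorem_Algebra"
begin

(*
  For a unit vector x put a = |T|^(t/2) x, b = |T|^(t/2) U^* x and a' = |T^*|^(t/2) x.
  Since T = U |T|, one has <Tx, x> = <|T|^(1-t) a, b>, and as the spectrum of |T| lies in
  [0, ||T||], the operator 2 |T|^(1-t) - ||T||^(1-t) I has norm at most ||T||^(1-t).  Writing
  2 |T|^(1-t) a = (2 |T|^(1-t) - ||T||^(1-t)) a + ||T||^(1-t) a gives the Buzano-type bound
  |<Tx, x>| <= ||T||^(1-t)/2 (||a|| ||b|| + |<a, b>|).  Moreover ||b|| <= ||a'|| (with equality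
  for t > 0, because |T^*|^s = U |T|^s U^* holds), and |<a, b>|^2 <= ||b||^2 (||a||^2 - d) where
  d = inf_c ||a - c b||^2; an elementary real inequality then bounds
  ||a|| ||b|| + |<a, b>| by ||a||^2 + ||a'||^2 - ||a'|| d / (2 ||a||), and
  ||a||^2 + ||a'||^2 = <(|T|^t + |T^*|^t) x, x> <= || |T|^t + |T^*|^t ||.  Taking x = x_n and
  letting n tend to infinity gives the theorem.

  Adjoints come from the Riesz representation theorem.  The key estimate ||p(A)|| <= sup |p| comes from p(A) >= 0
  whenever p > 0 on [0, ||A||], which holds because such p is a combination of squares
  weighted by X, ||A|| - X and X (||A|| - X).
*)

section \<open>Complex inner product spaces\<close>

declare scaleC_one [simp]

lemma scaleC_zero_left [simp]: "(0::complex) *\<^sub>C x = 0"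
  using scaleC_of_real[of 0 x] by simp

lemma scaleC_zero_right [simp]: "a *\<^sub>C (0::'a::complex_normed_vector) = 0"
  using norm_scaleC[of a "0::'a"] by simp

lemma scaleC_minus_left: "(- a) *\<^sub>C x = - (a *\<^sub>C (x::'a::complex_normed_vector))"
proof -
  have "(- a) *\<^sub>C x + a *\<^sub>C x = 0" by (simp flip: scaleC_add_left)
  then show ?thesis by (rule add_eq_0_iff2[THEN iffD1])
qed

lemma scaleC_diff_left: "(a - b) *\<^sub>C x = a *\<^sub>C x - b *\<^sub>C (x::'a::complex_normed_vector)"
  unfolding diff_conv_add_uminus by (simp only: scaleC_add_left scaleC_minus_left)

lemma cinner_add_left: "cinner (x + y) z = cinner x z + cinner y (z::'a::complex_inner)"
  by (subst (1 2 3) cinner_commute) (simp add: cinner_add_right)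

lemma cinner_scaleC_left: "cinner (a *\<^sub>C x) y = cnj a * cinner x (y::'a::complex_inner)"
  by (subst (1 2) cinner_commute) (simp add: cinner_scaleC_right)

lemma cinner_zero_right [simp]: "cinner x (0::'a::complex_inner) = 0"
  using cinner_add_right[of x 0 0] by simp

lemma cinner_zero_left [simp]: "cinner (0::'a::complex_inner) x = 0"
  using cinner_add_left[of 0 0 x] by simp

lemma cinner_minus_right: "cinner x (- y) = - cinner x (y::'a::complex_inner)"
  using cinner_add_right[of x "- y" y] by (simp add: eq_neg_iff_add_eq_0)

lemma cinner_minus_left: "cinner (- x) y = - cinner x (y::'a::complex_inner)"
  using cinner_add_left[of "- x" x y] by (simp add: eq_neg_iff_add_eq_0)

lemma cinner_diff_right: "cinner x (y - z) = cinner x y - cinner x (z::'a::complex_inner)"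
  unfolding diff_conv_add_uminus by (simp only: cinner_add_right cinner_minus_right)

lemma cinner_diff_left: "cinner (x - y) z = cinner x z - cinner y (z::'a::complex_inner)"
  unfolding diff_conv_add_uminus by (simp only: cinner_add_left cinner_minus_left)

lemma cinner_scaleR_right: "cinner x (r *\<^sub>R y) = of_real r * cinner x (y::'a::complex_inner)"
  by (simp add: cinner_scaleC_right flip: scaleC_of_real)

lemma cinner_scaleR_left: "cinner (r *\<^sub>R x) y = of_real r * cinner x (y::'a::complex_inner)"
  by (simp add: cinner_scaleC_left flip: scaleC_of_real)

lemma cinner_self_Re: "Re (cinner x x) = (norm (x::'a::complex_inner))\<^sup>2"
  by (simp add: cinner_self_norm)

lemma cinner_self_eq_0: "cinner x x = 0 \<longleftrightarrow> x = (0::'a::complex_inner)"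
  by (simp add: cinner_self_norm)

lemma cinner_ext: "(\<And>y. cinner x y = cinner z y) \<Longrightarrow> x = (z::'a::complex_inner)"
  using cinner_self_eq_0[of "x - z"] by (simp add: cinner_diff_left)

lemma cinner_ext_right: "(\<And>y. cinner y x = cinner y z) \<Longrightarrow> x = (z::'a::complex_inner)"
  by (metis cinner_commute cinner_ext)

lemma cinner_mult_cnj: "cinner x y * cinner y x = complex_of_real ((cmod (cinner x (y::'a::complex_inner)))\<^sup>2)"
  by (subst cinner_commute[of y x]) (simp only: complex_norm_square)

lemma norm_add_sq: "(norm (x + y))\<^sup>2 = (norm x)\<^sup>2 + (norm y)\<^sup>2 + 2 * Re (cinner x (y::'a::complex_inner))"
proof -
  have "(norm (x + y))\<^sup>2 = Re (cinner x x) + Re (cinner y y) + Re (cinner x y) + Re (cinner y x)"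
    by (simp add: cinner_self_Re[symmetric] cinner_add_left cinner_add_right)
  also have "Re (cinner y x) = Re (cinner x y)" by (subst cinner_commute) simp
  finally show ?thesis by (simp add: cinner_self_Re)
qed

lemma norm_diff_sq: "(norm (x - y))\<^sup>2 = (norm x)\<^sup>2 + (norm y)\<^sup>2 - 2 * Re (cinner x (y::'a::complex_inner))"
  using norm_add_sq[of x "- y"] by (simp add: cinner_minus_right)

lemma parallelogram_law:
  "(norm (x - y))\<^sup>2 + (norm (x + y))\<^sup>2 = 2 * (norm x)\<^sup>2 + 2 * (norm (y::'a::complex_inner))\<^sup>2"
  by (simp add: norm_add_sq norm_diff_sq)

lemma norm_diff_projection_sq:
  fixes a b :: "'a::complex_inner"
  assumes "b \<noteq> 0"
  shows "(norm (a - (cinner b a / complex_of_real ((norm b)\<^sup>2)) *\<^sub>C b))\<^sup>2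
       = (norm a)\<^sup>2 - (cmod (cinner a b))\<^sup>2 / (norm b)\<^sup>2"
proof -
  define c where "c = cinner b a / complex_of_real ((norm b)\<^sup>2)"
  have nb: "0 < norm b" using assms by simp
  have "c * cinner a b = complex_of_real ((cmod (cinner a b))\<^sup>2 / (norm b)\<^sup>2)"
    using cinner_mult_cnj[of a b] by (simp add: c_def mult.commute)
  moreover have "(cmod c * norm b)\<^sup>2 = (cmod (cinner a b))\<^sup>2 / (norm b)\<^sup>2"
    using nb by (simp add: c_def norm_divide norm_mult cinner_commute[of b a] power2_eq_square)
  moreover have "(norm (a - c *\<^sub>C b))\<^sup>2 = (norm a)\<^sup>2 + (cmod c * norm b)\<^sup>2 - 2 * Re (c * cinner a b)"
    by (simp add: norm_diff_sq norm_scaleC cinner_scaleC_right power_mult_distrib)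
  ultimately show ?thesis
    unfolding c_def[symmetric] by simp
qed

lemma norm_cinner_le: "cmod (cinner x y) \<le> norm x * norm (y::'a::complex_inner)"
proof (cases "y = 0")
  case False
  then have "(cmod (cinner x y))\<^sup>2 / (norm y)\<^sup>2 \<le> (norm x)\<^sup>2"
    using norm_diff_projection_sq[of y x] by (metis diff_ge_0_iff_ge zero_le_power2)
  then have "(cmod (cinner x y))\<^sup>2 \<le> (norm x * norm y)\<^sup>2"
    using False by (simp add: power_mult_distrib divide_le_eq)
  then show ?thesis by (simp add: power2_le_iff_abs_le)
qed simp

lemma tendsto_cinner_left:
  fixes f :: "nat \<Rightarrow> 'a::complex_inner"
  assumes "f \<longlonglongrightarrow> l" shows "(\<lambda>n. cinner (f n) y) \<longlonglongrightarrow> cinner l y"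
proof -
  have "(\<lambda>n. norm (f n - l) * norm y) \<longlonglongrightarrow> 0"
    using assms by (intro tendsto_mult_left_zero) (simp add: LIM_zero_iff tendsto_norm_zero)
  then have "(\<lambda>n. cinner (f n) y - cinner l y) \<longlonglongrightarrow> 0"
    by (rule Lim_null_comparison[rotated])
      (simp add: norm_cinner_le flip: cinner_diff_left)
  then show ?thesis by (simp add: LIM_zero_iff)
qed

lemma tendsto_cinner_right:
  fixes f :: "nat \<Rightarrow> 'a::complex_inner"
  assumes "f \<longlonglongrightarrow> l" shows "(\<lambda>n. cinner y (f n)) \<longlonglongrightarrow> cinner y l"
proof -
  have "(\<lambda>n. cnj (cinner (f n) y)) \<longlonglongrightarrow> cnj (cinner l y)"
    by (intro tendsto_cnj tendsto_cinner_left assms)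
  then show ?thesis by (subst (1 2) cinner_commute) simp
qed

lemma tendsto_scaleC_left:
  fixes z :: "'a::complex_normed_vector"
  assumes "c \<longlonglongrightarrow> l" shows "(\<lambda>n. c n *\<^sub>C z) \<longlonglongrightarrow> l *\<^sub>C z"
proof -
  have "(\<lambda>n. cmod (c n - l) * norm z) \<longlonglongrightarrow> 0"
    using assms by (intro tendsto_mult_left_zero) (simp add: LIM_zero_iff tendsto_norm_zero)
  then have "(\<lambda>n. c n *\<^sub>C z - l *\<^sub>C z) \<longlonglongrightarrow> 0"
    by (rule Lim_null_comparison[rotated]) (simp add: norm_scaleC flip: scaleC_diff_left)
  then show ?thesis by (simp add: LIM_zero_iff)
qed

section \<open>Bounded operators and the adjoint\<close>

lemma bopI:
  assumes "\<And>x y. T (x + y) = T x + T y" "\<And>c x. T (c *\<^sub>C x) = c *\<^sub>C T x"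
    and "\<And>x. norm (T x) \<le> K * norm x"
  shows "bop T"
  unfolding bop_def
proof (intro conjI allI)
  show "bounded_linear T"
  proof (rule bounded_linear_intro[where K=K])
    fix r x show "T (r *\<^sub>R x) = r *\<^sub>R T x"
      using assms(2)[of "complex_of_real r" x] by (simp add: scaleC_of_real)
  qed (use assms in \<open>auto simp: mult.commute\<close>)
qed (use assms in auto)

lemma bop_bounded_linear: "bop T \<Longrightarrow> bounded_linear T" by (simp add: bop_def)
lemma bop_scaleC: "bop T \<Longrightarrow> T (c *\<^sub>C x) = c *\<^sub>C T x" by (simp add: bop_def)
lemma bop_add: "bop T \<Longrightarrow> T (x + y) = T x + T y"
  using bop_bounded_linear linear_add bounded_linear.linear by blast
lemma bop_diff: "bop T \<Longrightarrow> T (x - y) = T x - T y"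
  using bop_bounded_linear linear_diff bounded_linear.linear by blast
lemma bop_minus: "bop T \<Longrightarrow> T (- x) = - T x"
  using bop_bounded_linear linear_neg bounded_linear.linear by blast
lemma bop_zero: "bop T \<Longrightarrow> T 0 = 0"
  using bop_bounded_linear linear_0 bounded_linear.linear by blast
lemma bop_scaleR: "bop T \<Longrightarrow> T (r *\<^sub>R x) = r *\<^sub>R T x"
  using bop_bounded_linear linear_scale bounded_linear.linear by blast
lemma norm_bop_le: "bop T \<Longrightarrow> norm (T x) \<le> onorm T * norm x"
  using bop_bounded_linear onorm by blast
lemma onorm_bop_nonneg: "bop T \<Longrightarrow> 0 \<le> onorm T"
  using bop_bounded_linear onorm_pos_le by blast
lemma bop_tendsto: "bop T \<Longrightarrow> X \<longlonglongrightarrow> l \<Longrightarrow> (\<lambda>n. T (X n)) \<longlonglongrightarrow> T l"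
  using bounded_linear.tendsto bop_bounded_linear by blast

lemma bop_zero_fun: "bop (\<lambda>x. 0)"
  by (rule bopI[where K=0]) auto

lemma bop_id: "bop (\<lambda>x. x)"
  by (rule bopI[where K=1]) auto

lemma bop_comp: "bop T \<Longrightarrow> bop S \<Longrightarrow> bop (\<lambda>x. T (S x))"
proof (rule bopI[where K="onorm T * onorm S"])
  fix x assume "bop T" "bop S"
  have "norm (T (S x)) \<le> onorm T * norm (S x)" using \<open>bop T\<close> by (rule norm_bop_le)
  also have "\<dots> \<le> onorm T * (onorm S * norm x)"
    using \<open>bop T\<close> \<open>bop S\<close> by (intro mult_left_mono norm_bop_le onorm_bop_nonneg)
  finally show "norm (T (S x)) \<le> onorm T * onorm S * norm x" by (simp add: mult.assoc)
qed (auto simp: bop_add bop_scaleC)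

lemma bop_add_fun: "bop T \<Longrightarrow> bop S \<Longrightarrow> bop (\<lambda>x. T x + S x)"
proof (rule bopI[where K="onorm T + onorm S"])
  fix x assume "bop T" "bop S"
  have "norm (T x + S x) \<le> norm (T x) + norm (S x)" by (rule norm_triangle_ineq)
  also have "\<dots> \<le> onorm T * norm x + onorm S * norm x"
    using \<open>bop T\<close> \<open>bop S\<close> by (intro add_mono norm_bop_le)
  finally show "norm (T x + S x) \<le> (onorm T + onorm S) * norm x" by (simp add: algebra_simps)
qed (auto simp: bop_add bop_scaleC scaleC_add_right)

lemma bop_scaleC_fun: "bop T \<Longrightarrow> bop (\<lambda>x. c *\<^sub>C T x)"
proof (rule bopI[where K="cmod c * onorm T"])
  fix x assume "bop T"
  show "norm (c *\<^sub>C T x) \<le> cmod c * onorm T * norm x"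
    using norm_bop_le[OF \<open>bop T\<close>, of x] by (simp add: norm_scaleC mult.assoc mult_left_mono)
qed (auto simp: bop_add bop_scaleC scaleC_add_right scaleC_scaleC mult.commute)

lemma bop_diff_fun: "bop T \<Longrightarrow> bop S \<Longrightarrow> bop (\<lambda>x. T x - S x)"
  using bop_add_fun[of T "\<lambda>x. (-1) *\<^sub>C S x"] bop_scaleC_fun[of S "-1"]
  by (simp add: scaleC_minus_left)

lemma bop_sum: "bop A \<Longrightarrow> A (\<Sum>i\<in>S. f i) = (\<Sum>i\<in>S. A (f i))"
  by (induction S rule: infinite_finite_induct) (simp_all add: bop_zero bop_add)

lemma minimizing_sequence_Cauchy:
  fixes K :: "'a::complex_inner set"
  assumes mid: "\<And>y z. y \<in> K \<Longrightarrow> z \<in> K \<Longrightarrow> (1/2::real) *\<^sub>R (y + z) \<in> K"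
    and d: "\<And>y. y \<in> K \<Longrightarrow> d \<le> norm (x0 - y)" "0 \<le> d"
    and ks: "\<And>n. ks n \<in> K" "\<And>n. (norm (x0 - ks n))\<^sup>2 \<le> d\<^sup>2 + 1 / Suc n"
  shows "Cauchy ks"
proof (rule metric_CauchyI)
  have dist_sq: "(dist (ks m) (ks n))\<^sup>2 \<le> 2 / Suc m + 2 / Suc n" for m n
  proof -
    \<comment> \<open>parallelogram law, with the midpoint of \<open>ks m\<close> and \<open>ks n\<close> lying in \<open>K\<close>\<close>
    have "(norm ((x0 - ks m) - (x0 - ks n)))\<^sup>2 + (norm ((x0 - ks m) + (x0 - ks n)))\<^sup>2
        = 2 * (norm (x0 - ks m))\<^sup>2 + 2 * (norm (x0 - ks n))\<^sup>2"
      by (rule parallelogram_law)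
    moreover have "(x0 - ks m) + (x0 - ks n) = 2 *\<^sub>R (x0 - (1/2::real) *\<^sub>R (ks m + ks n))"
      by (simp add: scaleR_right_diff_distrib scaleR_2)
    then have "(2 * d)\<^sup>2 \<le> (norm ((x0 - ks m) + (x0 - ks n)))\<^sup>2"
      using d(1)[OF mid[OF ks(1) ks(1)]] d(2) by (simp add: power_mono)
    moreover have "dist (ks m) (ks n) = norm ((x0 - ks m) - (x0 - ks n))"
      by (simp add: dist_norm norm_minus_commute)
    ultimately show ?thesis
      using ks(2)[of m] ks(2)[of n] d(2) by (simp add: power_mult_distrib)
  qed
  fix e :: real assume "0 < e"
  then have e2: "0 < e\<^sup>2" by simp
  obtain N :: nat where "4 / e\<^sup>2 < N" using reals_Archimedean2 by blast
  then have "4 < real N * e\<^sup>2" using e2 by (simp add: pos_divide_less_eq)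
  then have "4 < real (Suc N) * e\<^sup>2" by (simp add: distrib_right) (use e2 in linarith)
  then have N: "4 / Suc N < e\<^sup>2" by (simp add: divide_less_eq mult.commute)
  show "\<exists>M. \<forall>m\<ge>M. \<forall>n\<ge>M. dist (ks m) (ks n) < e"
  proof (intro exI allI impI)
    fix m n assume "N \<le> m" "N \<le> n"
    then have "2 / Suc m + 2 / Suc n \<le> 2 / Suc N + 2 / Suc N"
      by (intro add_mono) (simp_all add: frac_le)
    then have "(dist (ks m) (ks n))\<^sup>2 < e\<^sup>2" using dist_sq[of m n] N by simp
    then show "dist (ks m) (ks n) < e"
      using \<open>0 < e\<close> by (simp add: power_less_imp_less_base)
  qed
qed

lemma closest_point_exists:
  fixes K :: "'a::chilbert_space set"
  assumes "closed K" "K \<noteq> {}"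
    and mid: "\<And>y z. y \<in> K \<Longrightarrow> z \<in> K \<Longrightarrow> (1/2::real) *\<^sub>R (y + z) \<in> K"
  shows "\<exists>k\<in>K. \<forall>y\<in>K. norm (x0 - k) \<le> norm (x0 - y)"
proof -
  define d where "d = (INF y\<in>K. norm (x0 - y))"
  have d_le: "d \<le> norm (x0 - y)" if "y \<in> K" for y
    unfolding d_def using that by (intro cINF_lower) (auto intro: bdd_belowI[of _ 0])
  have d_nonneg: "0 \<le> d" unfolding d_def using \<open>K \<noteq> {}\<close> by (intro cINF_greatest) auto
  have "\<exists>k\<in>K. (norm (x0 - k))\<^sup>2 \<le> d\<^sup>2 + 1 / Suc n" for n
  proof -
    have "d < sqrt (d\<^sup>2 + 1 / Suc n)"
      using d_nonneg by (simp add: real_less_rsqrt)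
    then obtain k where "k \<in> K" "norm (x0 - k) < sqrt (d\<^sup>2 + 1 / Suc n)"
      using cInf_lessD[of "(\<lambda>y. norm (x0 - y)) ` K"] \<open>K \<noteq> {}\<close> unfolding d_def by auto
    then have "(norm (x0 - k))\<^sup>2 < (sqrt (d\<^sup>2 + 1 / Suc n))\<^sup>2" by (intro power_strict_mono) auto
    with \<open>k \<in> K\<close> show ?thesis by (auto intro: less_imp_le)
  qed
  then obtain ks where ks: "\<And>n. ks n \<in> K" "\<And>n. (norm (x0 - ks n))\<^sup>2 \<le> d\<^sup>2 + 1 / Suc n"
    by metis
  obtain k where lim: "ks \<longlonglongrightarrow> k"
    using minimizing_sequence_Cauchy[OF mid d_le d_nonneg ks] Cauchy_convergent_iff convergent_def
    by blast
  have "k \<in> K" using closed_sequentially[OF \<open>closed K\<close> ks(1) lim] .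
  have "(\<lambda>n. d\<^sup>2 + inverse (real (Suc n))) \<longlonglongrightarrow> d\<^sup>2 + 0"
    by (intro tendsto_add tendsto_const LIMSEQ_inverse_real_of_nat)
  moreover have "(\<lambda>n. (norm (x0 - ks n))\<^sup>2) \<longlonglongrightarrow> (norm (x0 - k))\<^sup>2"
    by (intro tendsto_intros lim)
  ultimately have "(norm (x0 - k))\<^sup>2 \<le> d\<^sup>2"
    using ks(2) by (intro LIMSEQ_le) (auto simp: inverse_eq_divide)
  then have "norm (x0 - k) \<le> d"
    using d_nonneg by (simp add: power2_le_iff_abs_le)
  with \<open>k \<in> K\<close> d_le show ?thesis by (meson order_trans)
qed

lemma closest_point_orthogonal:
  fixes K :: "'a::complex_inner set"
  assumes "k \<in> K" and min: "\<And>y. y \<in> K \<Longrightarrow> norm (x0 - k) \<le> norm (x0 - y)"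
    and add: "\<And>y z. y \<in> K \<Longrightarrow> z \<in> K \<Longrightarrow> y + z \<in> K"
    and scale: "\<And>c y. y \<in> K \<Longrightarrow> c *\<^sub>C y \<in> K"
    and "y \<in> K"
  shows "cinner (x0 - k) y = 0"
proof (cases "y = 0")
  case False
  define c where "c = cinner y (x0 - k) / complex_of_real ((norm y)\<^sup>2)"
  have "norm (x0 - k) \<le> norm ((x0 - k) - c *\<^sub>C y)"
    using min[OF add[OF \<open>k \<in> K\<close> scale[OF \<open>y \<in> K\<close>]]] by (simp add: algebra_simps)
  then have "(norm (x0 - k))\<^sup>2 \<le> (norm ((x0 - k) - c *\<^sub>C y))\<^sup>2" by (simp add: power_mono)
  also have "\<dots> = (norm (x0 - k))\<^sup>2 - (cmod (cinner (x0 - k) y))\<^sup>2 / (norm y)\<^sup>2"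
    unfolding c_def by (rule norm_diff_projection_sq[OF False])
  finally show ?thesis using False by (simp add: divide_le_0_iff)
qed simp

lemma Riesz_representation:
  fixes \<phi> :: "'a::chilbert_space \<Rightarrow> complex"
  assumes bl: "bounded_linear \<phi>" and hom: "\<And>c x. \<phi> (c *\<^sub>C x) = c * \<phi> x"
  shows "\<exists>z. \<forall>x. \<phi> x = cinner z x"
proof (cases "\<forall>x. \<phi> x = 0")
  case True then show ?thesis by (intro exI[of _ 0]) simp
next
  case False
  then obtain x0 where x0: "\<phi> x0 \<noteq> 0" by blast
  interpret bounded_linear \<phi> by fact
  define K where "K = {x. \<phi> x = 0}"
  have K_add: "y + z \<in> K" if "y \<in> K" "z \<in> K" for y z using that by (simp add: K_def add)
  have K_scale: "c *\<^sub>C y \<in> K" if "y \<in> K" for c y using that by (simp add: K_def hom)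
  have "closed K" unfolding K_def by (intro closed_Collect_eq continuous_intros continuous_on)
  moreover have "K \<noteq> {}" by (auto simp: K_def zero intro!: exI[of _ 0])
  moreover have "(1/2::real) *\<^sub>R (y + z) \<in> K" if "y \<in> K" "z \<in> K" for y z
    using that by (simp add: K_def add scaleR)
  ultimately obtain k where "k \<in> K" and "\<forall>y\<in>K. norm (x0 - k) \<le> norm (x0 - y)"
    using closest_point_exists by blast
  then have ort: "cinner (x0 - k) y = 0" if "y \<in> K" for y
    using closest_point_orthogonal[OF \<open>k \<in> K\<close> _ K_add K_scale that] by blast
  define y where "y = x0 - k"
  have "\<phi> y = \<phi> x0" using \<open>k \<in> K\<close> by (simp add: y_def K_def diff)
  then have ny: "cinner y y \<noteq> 0" using x0 by (auto simp: cinner_self_eq_0 zero)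
  show ?thesis
  proof (intro exI allI)
    fix x
    have "cinner y (\<phi> x *\<^sub>C y - \<phi> y *\<^sub>C x) = 0"
      using ort by (simp add: y_def K_def diff hom)
    then have "\<phi> x = \<phi> y * cinner y x / cinner y y"
      using ny by (simp add: cinner_diff_right cinner_scaleC_right field_simps)
    then show "\<phi> x = cinner ((cnj (\<phi> y / cinner y y)) *\<^sub>C y) x"
      by (simp add: cinner_scaleC_left)
  qed
qed

lemma adj_exists:
  fixes T :: "'a::chilbert_space \<Rightarrow> 'a"
  assumes "bop T" shows "\<exists>S. \<forall>x y. cinner (T x) y = cinner x (S y)"
proof -
  have "\<exists>z. \<forall>x. cinner y (T x) = cinner z x" for y
  proof (rule Riesz_representation)
    show "bounded_linear (\<lambda>x. cinner y (T x))"
    proof (rule bounded_linear_intro[where K="norm y * onorm T"])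
      fix a b show "cinner y (T (a + b)) = cinner y (T a) + cinner y (T b)"
        using assms by (simp add: bop_add cinner_add_right)
      fix r show "cinner y (T (r *\<^sub>R a)) = r *\<^sub>R cinner y (T a)"
        using assms by (simp add: bop_scaleR cinner_scaleR_right scaleR_conv_of_real)
      have "norm (cinner y (T a)) \<le> norm y * norm (T a)" by (rule norm_cinner_le)
      also have "\<dots> \<le> norm y * (onorm T * norm a)"
        using assms by (intro mult_left_mono norm_bop_le) auto
      finally show "norm (cinner y (T a)) \<le> norm a * (norm y * onorm T)" by (simp add: ac_simps)
    qed
  qed (use assms in \<open>simp add: bop_scaleC cinner_scaleC_right\<close>)
  then obtain S where "\<And>y x. cinner y (T x) = cinner (S y) x" by metis
  then show ?thesis by (metis cinner_commute)
qed

lemma cinner_adj_right: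
  fixes T :: "'a::chilbert_space \<Rightarrow> 'a"
  assumes "bop T" shows "cinner (T x) y = cinner x (adj T y)"
proof -
  obtain S where S: "\<forall>x y. cinner (T x) y = cinner x (S y)" using adj_exists[OF assms] by blast
  have "\<forall>x y. cinner (T x) y = cinner x (adj T y)"
    unfolding adj_def
  proof (rule theI[where a=S])
    fix S' assume "\<forall>x y. cinner (T x) y = cinner x (S' y)"
    with S show "S' = S" by (metis cinner_ext_right ext)
  qed (rule S)
  then show ?thesis by blast
qed

lemma cinner_adj_left:
  fixes T :: "'a::chilbert_space \<Rightarrow> 'a"
  assumes "bop T" shows "cinner (adj T x) y = cinner x (T y)"
  using cinner_adj_right[OF assms, of y x] by (metis cinner_commute)

lemma adj_eqI:
  fixes T :: "'a::chilbert_space \<Rightarrow> 'a"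
  assumes "bop T" "\<And>x y. cinner (T x) y = cinner x (S y)" shows "adj T = S"
  using assms cinner_adj_right[OF assms(1)] by (metis cinner_ext_right ext)

lemma bop_adj:
  fixes T :: "'a::chilbert_space \<Rightarrow> 'a"
  assumes T: "bop T" shows "bop (adj T)"
proof (rule bopI[where K="onorm T"])
  fix x y show "adj T (x + y) = adj T x + adj T y"
    by (rule cinner_ext_right) (simp add: cinner_adj_right[OF T, symmetric] cinner_add_right)
  fix c show "adj T (c *\<^sub>C x) = c *\<^sub>C adj T x"
    by (rule cinner_ext_right) (simp add: cinner_adj_right[OF T, symmetric] cinner_scaleC_right)
  have "(norm (adj T x))\<^sup>2 = Re (cinner (T (adj T x)) x)"
    by (simp add: cinner_adj_right[OF T] cinner_self_Re)
  also have "\<dots> \<le> norm (T (adj T x)) * norm x"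
    using complex_Re_le_cmod norm_cinner_le order_trans by blast
  also have "\<dots> \<le> onorm T * norm (adj T x) * norm x"
    using T by (intro mult_right_mono norm_bop_le) auto
  finally show "norm (adj T x) \<le> onorm T * norm x"
    by (cases "adj T x = 0") (auto simp: power2_eq_square onorm_bop_nonneg[OF T] ac_simps)
qed

lemma adj_adj:
  fixes T :: "'a::chilbert_space \<Rightarrow> 'a"
  assumes T: "bop T" shows "adj (adj T) = T"
  by (rule adj_eqI[OF bop_adj[OF T]]) (simp add: cinner_adj_left[OF T])

section \<open>Polynomials in an operator\<close>

lemma poly_op_eq_sum_lessThan:
  assumes "degree p < n"
  shows "poly_op A p x = (\<Sum>i<n. complex_of_real (coeff p i) *\<^sub>C (A ^^ i) x)"
  unfolding poly_op_def
  by (rule sum.mono_neutral_left) (use assms in \<open>auto simp: coeff_eq_0\<close>)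

lemma poly_op_0 [simp]: "poly_op A 0 x = 0"
  by (simp add: poly_op_def)

lemma poly_op_const: "poly_op A [:c:] x = complex_of_real c *\<^sub>C x"
  by (simp add: poly_op_def)

lemma poly_op_one: "poly_op A 1 x = x"
  using poly_op_const[of A 1 x] by (simp add: one_pCons)

context
  fixes A :: "'a::complex_normed_vector \<Rightarrow> 'a"
  assumes A: "bop A"
begin

lemma poly_op_pCons: "poly_op A (pCons a p) x = complex_of_real a *\<^sub>C x + A (poly_op A p x)"
proof -
  define n where "n = Suc (degree p)"
  have "poly_op A (pCons a p) x = (\<Sum>i<Suc n. complex_of_real (coeff (pCons a p) i) *\<^sub>C (A ^^ i) x)"
    using degree_pCons_le[of a p] by (intro poly_op_eq_sum_lessThan) (simp add: n_def)
  also have "\<dots> = complex_of_real a *\<^sub>C x + A (\<Sum>i<n. complex_of_real (coeff p i) *\<^sub>C (A ^^ i) x)"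
    by (simp add: sum.lessThan_Suc_shift bop_sum[OF A] bop_scaleC[OF A] del: sum.lessThan_Suc)
  also have "(\<Sum>i<n. complex_of_real (coeff p i) *\<^sub>C (A ^^ i) x) = poly_op A p x"
    by (rule poly_op_eq_sum_lessThan[symmetric]) (simp add: n_def)
  finally show ?thesis .
qed

lemma poly_op_X: "poly_op A [:0, 1:] x = A x"
  by (simp add: poly_op_pCons poly_op_const)

lemma poly_op_linear_factor: "poly_op A [:M, -1:] x = complex_of_real M *\<^sub>C x - A x"
  by (simp add: poly_op_pCons poly_op_const bop_minus[OF A] scaleC_minus_left)

lemma bop_poly_op: "bop (poly_op A p)"
proof (induction p)
  case 0 then show ?case using bop_zero_fun by (simp add: fun_eq_iff)
next
  case (pCons a p)
  then have "bop (\<lambda>x. complex_of_real a *\<^sub>C x + A (poly_op A p x))"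
    by (intro bop_add_fun bop_scaleC_fun bop_id bop_comp[OF A])
  then show ?case by (simp add: poly_op_pCons fun_eq_iff)
qed

lemma poly_op_add: "poly_op A (p + q) x = poly_op A p x + poly_op A q x"
  by (induction p q arbitrary: x rule: poly_induct2)
    (simp_all add: poly_op_pCons bop_add[OF A] scaleC_add_left algebra_simps)

lemma poly_op_smult: "poly_op A (smult c p) x = complex_of_real c *\<^sub>C poly_op A p x"
  by (induction p arbitrary: x) (simp_all add: poly_op_pCons bop_scaleC[OF A] scaleC_add_right scaleC_scaleC)

lemma poly_op_diff: "poly_op A (p - q) x = poly_op A p x - poly_op A q x"
  using poly_op_add[of p "- q" x] poly_op_smult[of "-1" q x] by (simp add: scaleC_minus_left)

lemma poly_op_mult: "poly_op A (p * q) x = poly_op A p (poly_op A q x)"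
proof (induction p arbitrary: x)
  case (pCons a p)
  have "poly_op A (pCons a p * q) x = poly_op A (smult a q + pCons 0 (p * q)) x" by simp
  also have "\<dots> = poly_op A (pCons a p) (poly_op A q x)"
    using pCons by (simp add: poly_op_add poly_op_smult poly_op_pCons)
  finally show ?case .
qed simp

lemma poly_op_commute: "poly_op A p (A x) = A (poly_op A p x)"
  using poly_op_mult[of p "[:0,1:]" x] poly_op_mult[of "[:0,1:]" p x] by (simp add: poly_op_X mult.commute)

end

section \<open>Self-adjoint and positive operators\<close>

definition selfadj :: "('a::complex_inner \<Rightarrow> 'a) \<Rightarrow> bool" where
  "selfadj A \<longleftrightarrow> bop A \<and> (\<forall>x y. cinner (A x) y = cinner x (A y))"

definition posop :: "('a::complex_inner \<Rightarrow> 'a) \<Rightarrow> bool" where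
  "posop A \<longleftrightarrow> selfadj A \<and> (\<forall>x. 0 \<le> Re (cinner (A x) x))"

lemma selfadj_bop: "selfadj A \<Longrightarrow> bop A" by (simp add: selfadj_def)
lemma selfadj_cinner: "selfadj A \<Longrightarrow> cinner (A x) y = cinner x (A y)" by (simp add: selfadj_def)
lemma posop_selfadj: "posop A \<Longrightarrow> selfadj A" by (simp add: posop_def)
lemma posop_bop: "posop A \<Longrightarrow> bop A" by (simp add: posop_def selfadj_def)
lemma posop_nonneg: "posop A \<Longrightarrow> 0 \<le> Re (cinner (A x) x)" by (simp add: posop_def)

lemma posop_id: "posop (\<lambda>x. x)"
  by (simp add: posop_def selfadj_def bop_id cinner_self_Re)

lemma selfadj_poly_op: "selfadj A \<Longrightarrow> selfadj (poly_op A p)"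
proof (induction p)
  case 0 then show ?case by (simp add: selfadj_def bop_zero_fun)
next
  case (pCons a p)
  have A: "bop A" using pCons.prems by (rule selfadj_bop)
  show ?case unfolding selfadj_def
  proof (intro conjI allI)
    show "bop (poly_op A (pCons a p))" by (rule bop_poly_op[OF A])
    fix x y
    show "cinner (poly_op A (pCons a p) x) y = cinner x (poly_op A (pCons a p) y)"
      using pCons selfadj_cinner[OF pCons.prems]
      by (simp add: poly_op_pCons[OF A] cinner_add_left cinner_add_right cinner_scaleC_left
          cinner_scaleC_right selfadj_cinner poly_op_commute[OF A])
  qed
qed

lemma selfadj_add: "selfadj A \<Longrightarrow> selfadj B \<Longrightarrow> selfadj (\<lambda>x. A x + B x)"
  by (simp add: selfadj_def bop_add_fun cinner_add_left cinner_add_right)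

lemma posop_add: "posop A \<Longrightarrow> posop B \<Longrightarrow> posop (\<lambda>x. A x + B x)"
  by (simp add: posop_def selfadj_add cinner_add_left add_nonneg_nonneg)

lemma posop_congruence:
  assumes "posop C" "selfadj X" shows "posop (\<lambda>x. X (C (X x)))"
  unfolding posop_def selfadj_def
proof (intro conjI allI)
  show "bop (\<lambda>x. X (C (X x)))"
    using assms bop_comp[of X "\<lambda>x. C (X x)"] bop_comp[of C X] by (simp add: posop_bop selfadj_bop)
  fix x y
  show "cinner (X (C (X x))) y = cinner x (X (C (X y)))"
    using assms by (simp add: selfadj_cinner posop_selfadj)
  show "0 \<le> Re (cinner (X (C (X x))) x)"
    using assms by (simp add: selfadj_cinner posop_nonneg)
qed

lemma Re_cinner_le_onorm:
  assumes "bop A" shows "Re (cinner (A x) x) \<le> onorm A * (norm x)\<^sup>2"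
proof -
  have "Re (cinner (A x) x) \<le> norm (A x) * norm x"
    using complex_Re_le_cmod norm_cinner_le order_trans by blast
  also have "\<dots> \<le> onorm A * norm x * norm x"
    using assms by (intro mult_right_mono norm_bop_le) auto
  finally show ?thesis by (simp add: power2_eq_square mult.assoc)
qed

lemma posop_quadratic_form_nonneg:
  assumes P: "posop A"
  shows "0 \<le> Re (cinner (A x) x) - 2 * r * (cmod (cinner (A x) y))\<^sup>2
              + r\<^sup>2 * (cmod (cinner (A x) y))\<^sup>2 * Re (cinner (A y) y)"
proof -
  have A: "bop A" using P by (rule posop_bop)
  define w where "w = cinner (A x) y"
  define s where "s = - complex_of_real r * cnj w"
  have Ayx: "cinner (A y) x = cnj w"
    unfolding w_def by (subst cinner_commute) (simp add: selfadj_cinner[OF posop_selfadj[OF P]])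
  have sw: "s * w = - complex_of_real (r * (cmod w)\<^sup>2)"
  proof -
    have "cnj w * w = complex_of_real ((cmod w)\<^sup>2)" by (simp only: complex_norm_square mult.commute)
    then show ?thesis by (simp add: s_def mult.assoc)
  qed
  have ww: "w * cnj w = complex_of_real ((cmod w)\<^sup>2)" by (simp only: complex_norm_square)
  have "0 \<le> Re (cinner (A (x + s *\<^sub>C y)) (x + s *\<^sub>C y))" using P by (rule posop_nonneg)
  also have "cinner (A (x + s *\<^sub>C y)) (x + s *\<^sub>C y)
      = cinner (A x) x + s * w + cnj (s * w) + cnj s * s * cinner (A y) y"
    by (simp add: bop_add[OF A] bop_scaleC[OF A] cinner_add_left cinner_add_right
        cinner_scaleC_left cinner_scaleC_right w_def Ayx[unfolded w_def] algebra_simps)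
  also have "cnj s * s = complex_of_real (r\<^sup>2 * (cmod w)\<^sup>2)"
    using ww by (simp add: s_def power2_eq_square algebra_simps)
  finally show ?thesis by (simp add: sw flip: w_def)
qed

lemma posop_Cauchy_Schwarz:
  assumes P: "posop A"
  shows "(cmod (cinner (A x) y))\<^sup>2 \<le> Re (cinner (A x) x) * Re (cinner (A y) y)"
proof -
  define w where "w = (cmod (cinner (A x) y))\<^sup>2"
  define p where "p = Re (cinner (A x) x)"
  define q where "q = Re (cinner (A y) y)"
  have quad: "0 \<le> p - 2 * r * w + r\<^sup>2 * w * q" for r
    using posop_quadratic_form_nonneg[OF P, of x r y] by (simp add: w_def p_def q_def)
  have "p \<ge> 0" "q \<ge> 0" using P by (auto simp: p_def q_def posop_nonneg)
  show ?thesis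
  proof (cases "q = 0")
    case True
    have "w \<le> 0"
    proof (rule ccontr)
      assume "\<not> w \<le> 0"
      then show False using quad[of "(p + 1) / w"] True \<open>p \<ge> 0\<close> by simp
    qed
    moreover have "0 \<le> p * q" using \<open>p \<ge> 0\<close> \<open>q \<ge> 0\<close> by simp
    ultimately show ?thesis unfolding w_def[symmetric] p_def[symmetric] q_def[symmetric] by linarith
  next
    case False
    then have "0 < q" using \<open>q \<ge> 0\<close> by simp
    then have "0 \<le> p - w / q" using quad[of "1 / q"] by (simp add: power2_eq_square field_simps)
    then show ?thesis using \<open>0 < q\<close> by (simp add: w_def p_def q_def field_simps)
  qed
qed

lemma posop_norm_sq_le:
  assumes P: "posop A"
  shows "(norm (A x))\<^sup>2 \<le> onorm A * Re (cinner (A x) x)"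
proof (cases "A x = 0")
  case True then show ?thesis using P by (simp add: posop_nonneg onorm_bop_nonneg posop_bop)
next
  case False
  have "((norm (A x))\<^sup>2)\<^sup>2 = (cmod (cinner (A x) (A x)))\<^sup>2" by (simp add: cinner_self_norm norm_power)
  also have "\<dots> \<le> Re (cinner (A x) x) * Re (cinner (A (A x)) (A x))"
    by (rule posop_Cauchy_Schwarz[OF P])
  also have "\<dots> \<le> Re (cinner (A x) x) * (onorm A * (norm (A x))\<^sup>2)"
    using P by (intro mult_left_mono Re_cinner_le_onorm posop_nonneg posop_bop)
  finally have "(norm (A x))\<^sup>2 * (norm (A x))\<^sup>2 \<le> (onorm A * Re (cinner (A x) x)) * (norm (A x))\<^sup>2"
    by (simp add: power2_eq_square ac_simps)
  moreover have "0 < (norm (A x))\<^sup>2" using False by simp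
  ultimately show ?thesis by (rule mult_right_le_imp_le)
qed

section \<open>Polynomials positive on an interval\<close>

definition cpoly :: "real poly \<Rightarrow> complex \<Rightarrow> complex" where
  "cpoly p z = poly (map_poly complex_of_real p) z"

lemma cpoly_0 [simp]: "cpoly 0 z = 0"
  by (simp add: cpoly_def)

lemma cpoly_pCons: "cpoly (pCons a p) z = of_real a + z * cpoly p z"
  by (simp add: cpoly_def map_poly_pCons)

lemma cpoly_add: "cpoly (p + q) z = cpoly p z + cpoly q z"
  by (induction p q rule: poly_induct2) (simp_all add: cpoly_pCons algebra_simps)

lemma cpoly_smult: "cpoly (smult c p) z = of_real c * cpoly p z"
  by (induction p) (simp_all add: cpoly_pCons algebra_simps)

lemma cpoly_mult: "cpoly (p * q) z = cpoly p z * cpoly q z"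
proof (induction p)
  case (pCons a p)
  have "cpoly (pCons a p * q) z = cpoly (smult a q + pCons 0 (p * q)) z" by simp
  also have "\<dots> = cpoly (pCons a p) z * cpoly q z"
    using pCons by (simp add: cpoly_add cpoly_smult cpoly_pCons algebra_simps)
  finally show ?case .
qed simp

lemma cpoly_of_real: "cpoly p (of_real r) = of_real (poly p r)"
  by (induction p) (simp_all add: cpoly_pCons)

lemma cmod_mult_self: "cmod z * cmod z = Re z * Re z + Im z * Im z"
  using cmod_power2[of z] by (simp add: power2_eq_square)

lemma cpoly_root_exists: "degree p > 0 \<Longrightarrow> \<exists>z. cpoly p z = 0"
  unfolding cpoly_def
  by (rule fundamental_theorem_of_algebra) (simp add: constant_degree degree_map_poly)

inductive interval_certificate :: "real \<Rightarrow> real poly \<Rightarrow> bool" for M where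
  sq: "interval_certificate M (g * g)"
| sq_X: "interval_certificate M (g * g * [:0, 1:])"
| sq_MX: "interval_certificate M (g * g * [:M, -1:])"
| sq_X_MX: "interval_certificate M (g * g * ([:0, 1:] * [:M, -1:]))"
| add: "interval_certificate M p \<Longrightarrow> interval_certificate M q \<Longrightarrow> interval_certificate M (p + q)"

lemma interval_certificate_mult_X:
  "interval_certificate M p \<Longrightarrow> interval_certificate M ([:0, 1:] * p)"
proof (induction rule: interval_certificate.induct)
  case (sq g)
  then show ?case using interval_certificate.sq_X[of M g] by (simp only: mult_ac)
next
  case (sq_X g)
  then show ?case using interval_certificate.sq[of M "g * [:0,1:]"] by (simp only: mult_ac)
next
  case (sq_MX g)
  then show ?case using interval_certificate.sq_X_MX[of M g] by (simp only: mult_ac)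
next
  case (sq_X_MX g)
  then show ?case using interval_certificate.sq_MX[of M "g * [:0,1:]"] by (simp only: mult_ac)
next
  case (add p q)
  then show ?case using interval_certificate.add by (simp only: distrib_left)
qed

lemma interval_certificate_mult_MX:
  "interval_certificate M p \<Longrightarrow> interval_certificate M ([:M, -1:] * p)"
proof (induction rule: interval_certificate.induct)
  case (sq g)
  then show ?case using interval_certificate.sq_MX[of M g] by (simp only: mult_ac)
next
  case (sq_X g)
  then show ?case using interval_certificate.sq_X_MX[of M g] by (simp only: mult_ac)
next
  case (sq_MX g)
  then show ?case using interval_certificate.sq[of M "g * [:M,-1:]"] by (simp only: mult_ac)
next
  case (sq_X_MX g)
  then show ?case using interval_certificate.sq_X[of M "g * [:M,-1:]"] by (simp only: mult_ac)
next
  case (add p q)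
  then show ?case using interval_certificate.add by (simp only: distrib_left)
qed

lemma interval_certificate_mult_sq:
  "interval_certificate M p \<Longrightarrow> interval_certificate M (h * h * p)"
proof (induction rule: interval_certificate.induct)
  case (sq g)
  then show ?case using interval_certificate.sq[of M "h * g"] by (simp only: mult_ac)
next
  case (sq_X g)
  then show ?case using interval_certificate.sq_X[of M "h * g"] by (simp only: mult_ac)
next
  case (sq_MX g)
  then show ?case using interval_certificate.sq_MX[of M "h * g"] by (simp only: mult_ac)
next
  case (sq_X_MX g)
  then show ?case using interval_certificate.sq_X_MX[of M "h * g"] by (simp only: mult_ac)
next
  case (add p q)
  then show ?case using interval_certificate.add by (simp only: distrib_left)
qed

lemma interval_certificate_smult:
  "0 \<le> c \<Longrightarrow> interval_certificate M p \<Longrightarrow> interval_certificate M (smult c p)"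
  using interval_certificate_mult_sq[of M p "[:sqrt c:]"] by (simp add: real_sqrt_mult[symmetric])

lemma interval_certificate_const: "0 \<le> c \<Longrightarrow> interval_certificate M [:c:]"
  using interval_certificate.sq[of M "[:sqrt c:]"] by (simp add: real_sqrt_mult[symmetric])

lemma interval_certificate_root_below:
  assumes "r < 0" "interval_certificate M q"
  shows "interval_certificate M ([:- r, 1:] * q)"
proof -
  have "[:0,1:] * q + smult (- r) q = [:- r, 1:] * q" by (simp add: poly_eq_iff algebra_simps)
  moreover have "interval_certificate M ([:0,1:] * q + smult (- r) q)"
    using assms by (intro interval_certificate.add interval_certificate_mult_X interval_certificate_smult) auto
  ultimately show ?thesis by metis
qed

lemma interval_certificate_root_above:
  assumes "M < r" "interval_certificate M q"
  shows "interval_certificate M ([:r, -1:] * q)"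
proof -
  have "[:M,-1:] * q + smult (r - M) q = [:r, -1:] * q" by (simp add: poly_eq_iff algebra_simps)
  moreover have "interval_certificate M ([:M,-1:] * q + smult (r - M) q)"
    using assms by (intro interval_certificate.add interval_certificate_mult_MX interval_certificate_smult) auto
  ultimately show ?thesis by metis
qed

lemma interval_certificate_quadratic:
  assumes "interval_certificate M q"
  shows "interval_certificate M ([:(cmod z)\<^sup>2, - 2 * Re z, 1:] * q)"
proof -
  have "[:(cmod z)\<^sup>2, - 2 * Re z, 1:] = [:- Re z, 1:] * [:- Re z, 1:] + [:Im z:] * [:Im z:]"
    by (simp add: cmod_mult_self power2_eq_square)
  then show ?thesis
    using assms by (simp only: distrib_right) (intro interval_certificate.add interval_certificate_mult_sq)
qed

lemma poly_quadratic_pos: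
  assumes "Im z \<noteq> 0" shows "0 < poly [:(cmod z)\<^sup>2, - 2 * Re z, 1:] s"
proof -
  have "poly [:(cmod z)\<^sup>2, - 2 * Re z, 1:] s = (s - Re z)\<^sup>2 + (Im z)\<^sup>2"
    by (simp add: cmod_mult_self power2_eq_square algebra_simps)
  then show ?thesis using assms by (simp add: add_nonneg_pos)
qed

lemma quadratic_dvd_of_nonreal_root:
  fixes p :: "real poly"
  assumes z: "cpoly p z = 0" and im: "Im z \<noteq> 0"
  shows "[:(cmod z)\<^sup>2, - 2 * Re z, 1:] dvd p"
proof -
  define Q where "Q = [:(cmod z)\<^sup>2, - 2 * Re z, 1:]"
  define r where "r = p mod Q"
  have "cpoly Q z = 0"
    by (simp add: Q_def cpoly_pCons cmod_mult_self complex_eq_iff power2_eq_square algebra_simps)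
  moreover have "p = Q * (p div Q) + r" by (simp add: r_def)
  then have "cpoly p z = cpoly Q z * cpoly (p div Q) z + cpoly r z"
    by (metis cpoly_add cpoly_mult)
  ultimately have rz: "cpoly r z = 0" using z by simp
  have "degree r < 2 \<or> r = 0" using degree_mod_less[of Q p] by (auto simp: Q_def r_def)
  then have "degree r \<le> 1" by auto
  then obtain c0 c1 where r: "r = [:c0, c1:]"
  proof (cases r)
    case (pCons c0 r')
    with \<open>degree r \<le> 1\<close> have "degree r' = 0" by (cases "r' = 0") auto
    then show ?thesis using that pCons by (metis degree_eq_zeroE)
  qed
  then have "of_real c0 + z * of_real c1 = 0" using rz by (simp add: cpoly_pCons)
  then have "c0 = 0 \<and> c1 = 0" using im by (auto simp: complex_eq_iff)
  then show ?thesis using r by (simp add: Q_def r_def mod_eq_0_iff_dvd)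
qed

lemma positive_factor_exists:
  fixes p :: "real poly"
  assumes "0 < degree p" and pos: "\<And>s. s \<in> {0..M} \<Longrightarrow> 0 < poly p s"
  shows "\<exists>L q. p = L * q \<and> 0 < degree L \<and> (\<forall>s\<in>{0..M}. 0 < poly L s)
           \<and> (interval_certificate M q \<longrightarrow> interval_certificate M p)"
proof -
  obtain z where z: "cpoly p z = 0" using cpoly_root_exists \<open>0 < degree p\<close> by blast
  show ?thesis
  proof (cases "Im z = 0")
    case True
    define r where "r = Re z"
    have "z = of_real r" using True by (simp add: r_def complex_eq_iff)
    then have "poly p r = 0" using z by (simp add: cpoly_of_real)
    then obtain q where pq: "p = [:- r, 1:] * q" using poly_eq_0_iff_dvd by (metis dvdE)
    have "r \<notin> {0..M}" using pos \<open>poly p r = 0\<close> by fastforce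
    then consider "r < 0" | "M < r" by fastforce
    then show ?thesis
    proof cases
      case 1
      then show ?thesis using pq interval_certificate_root_below[OF 1] by fastforce
    next
      case 2
      have "p = [:r, -1:] * (- q)" using pq by simp
      then show ?thesis using interval_certificate_root_above[OF 2] 2 by fastforce
    qed
  next
    case False
    obtain q where "p = [:(cmod z)\<^sup>2, - 2 * Re z, 1:] * q"
      using quadratic_dvd_of_nonreal_root[OF z False] by (metis dvdE)
    then show ?thesis
      using poly_quadratic_pos[OF False] interval_certificate_quadratic by fastforce
  qed
qed

theorem interval_certificate_of_pos:
  fixes p :: "real poly"
  assumes "0 \<le> M" and "\<And>s. s \<in> {0..M} \<Longrightarrow> 0 < poly p s"
  shows "interval_certificate M p"
  using assms(2)
proof (induction "degree p" arbitrary: p rule: less_induct)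
  case less
  show ?case
  proof (cases "degree p = 0")
    case True
    then obtain c where "p = [:c:]" by (metis degree_eq_zeroE)
    moreover have "0 < poly p 0" using less.prems \<open>0 \<le> M\<close> by auto
    ultimately show ?thesis by (auto intro: interval_certificate_const)
  next
    case False
    then obtain L q where pq: "p = L * q" and L: "0 < degree L" "\<forall>s\<in>{0..M}. 0 < poly L s"
      and lift: "interval_certificate M q \<longrightarrow> interval_certificate M p"
      using positive_factor_exists[OF _ less.prems] by blast
    have "L \<noteq> 0" "q \<noteq> 0" using L(1) False pq by auto
    then have "degree q < degree p" using L(1) pq by (simp add: degree_mult_eq)
    moreover have "0 < poly q s" if "s \<in> {0..M}" for s
      using less.prems[OF that] bspec[OF L(2) that] pq by (simp add: zero_less_mult_iff)
    ultimately show ?thesis using less.hyps lift by blast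
  qed
qed

section \<open>Positivity of polynomials in a positive operator\<close>

lemma le_of_forall_pos_le_add_mult:
  fixes a b c :: real
  assumes "\<And>e. 0 < e \<Longrightarrow> a \<le> c + e * b"
  shows "a \<le> c"
proof (rule field_le_epsilon)
  fix e :: real assume "0 < e"
  have "a \<le> c + e / (\<bar>b\<bar> + 1) * b" using \<open>0 < e\<close> by (intro assms) (simp add: add_nonneg_pos)
  also have "e / (\<bar>b\<bar> + 1) * b \<le> e * (\<bar>b\<bar> / (\<bar>b\<bar> + 1))"
    using \<open>0 < e\<close> by (simp add: divide_right_mono mult_left_mono)
  also have "\<dots> \<le> e" using \<open>0 < e\<close> by (intro mult_left_le) auto
  finally show "a \<le> c + e" by simp
qed

context
  fixes A :: "'a::chilbert_space \<Rightarrow> 'a"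
  assumes P: "posop A"
begin

lemma posop_poly_op_X: "posop (poly_op A [:0, 1:])"
proof -
  have "poly_op A [:0, 1:] = A" by (simp add: fun_eq_iff poly_op_X[OF posop_bop[OF P]])
  then show ?thesis using P by simp
qed

lemma posop_poly_op_MX:
  assumes "onorm A \<le> M" shows "posop (poly_op A [:M, -1:])"
  unfolding posop_def
proof (intro conjI allI)
  show "selfadj (poly_op A [:M, -1:])" by (rule selfadj_poly_op[OF posop_selfadj[OF P]])
  fix x
  have "Re (cinner (A x) x) \<le> M * (norm x)\<^sup>2"
    using Re_cinner_le_onorm[OF posop_bop[OF P], of x] assms
    by (meson mult_right_mono order_trans zero_le_power2)
  then show "0 \<le> Re (cinner (poly_op A [:M, -1:] x) x)"
    by (simp add: poly_op_linear_factor[OF posop_bop[OF P]] cinner_diff_left cinner_scaleC_left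
        cinner_self_Re)
qed

lemma posop_poly_op_X_MX:
  assumes "onorm A \<le> M" shows "posop (poly_op A ([:0, 1:] * [:M, -1:]))"
  unfolding posop_def
proof (intro conjI allI)
  have A: "bop A" using P by (rule posop_bop)
  show "selfadj (poly_op A ([:0, 1:] * [:M, -1:]))" by (rule selfadj_poly_op[OF posop_selfadj[OF P]])
  fix x
  have "poly_op A ([:0, 1:] * [:M, -1:]) x = complex_of_real M *\<^sub>C A x - A (A x)"
    by (simp only: poly_op_mult[OF A] poly_op_X[OF A] poly_op_linear_factor[OF A] bop_diff[OF A]
        bop_scaleC[OF A])
  moreover have "cinner (A (A x)) x = cinner (A x) (A x)"
    by (rule selfadj_cinner[OF posop_selfadj[OF P]])
  moreover have "(norm (A x))\<^sup>2 \<le> M * Re (cinner (A x) x)"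
    using posop_norm_sq_le[OF P, of x] assms posop_nonneg[OF P, of x]
    by (meson mult_right_mono order_trans)
  ultimately show "0 \<le> Re (cinner (poly_op A ([:0, 1:] * [:M, -1:]) x) x)"
    by (simp add: cinner_diff_left cinner_scaleC_left cinner_self_Re)
qed

lemma posop_poly_op_sq_mult:
  assumes "posop (poly_op A m)" shows "posop (poly_op A (g * g * m))"
proof -
  have A: "bop A" using P by (rule posop_bop)
  have "g * g * m = g * (m * g)" by (simp only: mult_ac)
  then have "poly_op A (g * g * m) = (\<lambda>x. poly_op A g (poly_op A m (poly_op A g x)))"
    by (simp only: fun_eq_iff poly_op_mult[OF A] simp_thms)
  then show ?thesis
    using posop_congruence[OF assms selfadj_poly_op[OF posop_selfadj[OF P]]] by simp
qed

lemma posop_poly_op_of_certificate: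
  assumes "onorm A \<le> M" "interval_certificate M p"
  shows "posop (poly_op A p)"
  using assms(2)
proof (induction rule: interval_certificate.induct)
  case (sq g)
  have "poly_op A 1 = (\<lambda>x. x)" by (simp add: fun_eq_iff poly_op_one)
  then have "posop (poly_op A 1)" using posop_id by simp
  then show ?case using posop_poly_op_sq_mult[of 1 g] by simp
next
  case (sq_X g) show ?case by (rule posop_poly_op_sq_mult[OF posop_poly_op_X])
next
  case (sq_MX g) show ?case by (rule posop_poly_op_sq_mult[OF posop_poly_op_MX[OF assms(1)]])
next
  case (sq_X_MX g) show ?case by (rule posop_poly_op_sq_mult[OF posop_poly_op_X_MX[OF assms(1)]])
next
  case (add p q)
  then show ?case using posop_add[OF add.IH] by (simp add: poly_op_add[OF posop_bop[OF P]] fun_eq_iff)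
qed

lemma poly_op_nonneg:
  assumes "\<And>s. s \<in> {0..onorm A} \<Longrightarrow> 0 \<le> poly p s"
  shows "0 \<le> Re (cinner (poly_op A p x) x)"
proof (rule le_of_forall_pos_le_add_mult[where b = "(norm x)\<^sup>2"])
  fix e :: real assume "0 < e"
  have "interval_certificate (onorm A) (p + [:e:])"
    using assms \<open>0 < e\<close> onorm_bop_nonneg[OF posop_bop[OF P]]
    by (intro interval_certificate_of_pos) (auto simp: add_nonneg_pos)
  then have "0 \<le> Re (cinner (poly_op A (p + [:e:]) x) x)"
    by (intro posop_nonneg posop_poly_op_of_certificate) auto
  then show "0 \<le> Re (cinner (poly_op A p x) x) + e * (norm x)\<^sup>2"
    by (simp add: poly_op_add[OF posop_bop[OF P]] poly_op_const cinner_add_left cinner_scaleC_left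
        cinner_self_Re)
qed

lemma norm_poly_op_le:
  assumes bound: "\<And>s. s \<in> {0..onorm A} \<Longrightarrow> \<bar>poly p s\<bar> \<le> c"
  shows "norm (poly_op A p x) \<le> c * norm x"
proof -
  have A: "bop A" using P by (rule posop_bop)
  have "0 \<le> c" using bound[of 0] onorm_bop_nonneg[OF A] by force
  have "0 \<le> Re (cinner (poly_op A ([:c\<^sup>2:] - p * p) x) x)"
  proof (rule poly_op_nonneg)
    fix s assume "s \<in> {0..onorm A}"
    then have "(poly p s)\<^sup>2 \<le> c\<^sup>2" using bound by (metis abs_le_square_iff abs_of_nonneg \<open>0 \<le> c\<close>)
    then show "0 \<le> poly ([:c\<^sup>2:] - p * p) s" by (simp add: power2_eq_square)
  qed
  also have "Re (cinner (poly_op A ([:c\<^sup>2:] - p * p) x) x) = c\<^sup>2 * (norm x)\<^sup>2 - (norm (poly_op A p x))\<^sup>2"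
  proof -
    have "poly_op A ([:c\<^sup>2:] - p * p) x = complex_of_real (c\<^sup>2) *\<^sub>C x - poly_op A p (poly_op A p x)"
      by (simp only: poly_op_diff[OF A] poly_op_mult[OF A] poly_op_const)
    moreover have "cinner (poly_op A p (poly_op A p x)) x = cinner (poly_op A p x) (poly_op A p x)"
      by (rule selfadj_cinner[OF selfadj_poly_op[OF posop_selfadj[OF P]]])
    ultimately show ?thesis by (simp add: cinner_diff_left cinner_scaleC_left cinner_self_Re)
  qed
  finally have "(norm (poly_op A p x))\<^sup>2 \<le> (c * norm x)\<^sup>2" by (simp add: power_mult_distrib)
  then show ?thesis using \<open>0 \<le> c\<close> by (simp add: power2_le_iff_abs_le)
qed

end

section \<open>The continuous functional calculus\<close>

context
  fixes F :: "nat \<Rightarrow> 'a::complex_normed_vector \<Rightarrow> 'a" and B :: "'a \<Rightarrow> 'a"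
  assumes F: "\<And>n. bop (F n)" and B: "bop B"
begin

lemma onorm_diff_tendsto_zeroI:
  assumes "\<And>e. 0 < e \<Longrightarrow> \<exists>N. \<forall>n\<ge>N. \<forall>x. norm (F n x - B x) \<le> e * norm x"
  shows "(\<lambda>n. onorm (\<lambda>x. F n x - B x)) \<longlonglongrightarrow> 0"
proof (rule LIMSEQ_I)
  fix r :: real assume "0 < r"
  then obtain N where N: "\<And>n x. n \<ge> N \<Longrightarrow> norm (F n x - B x) \<le> r / 2 * norm x"
    using assms[of "r / 2"] by auto
  show "\<exists>N. \<forall>n\<ge>N. norm (onorm (\<lambda>x. F n x - B x) - 0) < r"
  proof (intro exI allI impI)
    fix n assume "N \<le> n"
    then have "onorm (\<lambda>x. F n x - B x) \<le> r / 2"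
      using N \<open>0 < r\<close> by (intro onorm_bound) auto
    moreover have "0 \<le> onorm (\<lambda>x. F n x - B x)" by (intro onorm_bop_nonneg bop_diff_fun F B)
    ultimately show "norm (onorm (\<lambda>x. F n x - B x) - 0) < r" using \<open>0 < r\<close> by simp
  qed
qed

lemma onorm_diff_tendsto_zeroD:
  assumes "(\<lambda>n. onorm (\<lambda>x. F n x - B x)) \<longlonglongrightarrow> 0" "0 < e"
  shows "\<exists>N. \<forall>n\<ge>N. \<forall>x. norm (F n x - B x) \<le> e * norm x"
proof -
  obtain N where N: "\<And>n. n \<ge> N \<Longrightarrow> onorm (\<lambda>x. F n x - B x) < e"
    using LIMSEQ_D[OF assms] by (metis abs_less_iff diff_zero real_norm_def)
  have "norm (F n x - B x) \<le> e * norm x" if "n \<ge> N" for n x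
    using norm_bop_le[OF bop_diff_fun[OF F B], of n x] N[OF that]
    by (meson less_imp_le mult_right_mono norm_ge_zero order_trans)
  then show ?thesis by blast
qed

lemma tendsto_of_onorm_diff_tendsto_zero:
  assumes "(\<lambda>n. onorm (\<lambda>x. F n x - B x)) \<longlonglongrightarrow> 0"
  shows "(\<lambda>n. F n x) \<longlonglongrightarrow> B x"
proof -
  have "(\<lambda>n. onorm (\<lambda>x. F n x - B x) * norm x) \<longlonglongrightarrow> 0"
    using assms by (rule tendsto_mult_left_zero)
  then have "(\<lambda>n. F n x - B x) \<longlonglongrightarrow> 0"
    by (rule Lim_null_comparison[rotated]) (simp add: norm_bop_le[OF bop_diff_fun[OF F B]])
  then show ?thesis by (simp add: LIM_zero_iff)
qed

end

lemma bop_pointwise_limit: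
  assumes F: "\<And>n. bop (F n)" and lim: "\<And>x. (\<lambda>n. F n x) \<longlonglongrightarrow> B x"
    and close: "\<And>x. norm (F N x - B x) \<le> norm x"
  shows "bop B"
proof (rule bopI[where K="onorm (F N) + 1"])
  fix x y
  have "(\<lambda>n. F n (x + y)) \<longlonglongrightarrow> B x + B y"
    using tendsto_add[OF lim[of x] lim[of y]] by (simp add: bop_add[OF F])
  then show "B (x + y) = B x + B y" using lim[of "x + y"] LIMSEQ_unique by blast
next
  fix c x
  have "(\<lambda>n. F n (c *\<^sub>C x)) \<longlonglongrightarrow> c *\<^sub>C B x"
    using bop_tendsto[OF bop_scaleC_fun[OF bop_id] lim[of x]] by (simp add: bop_scaleC[OF F])
  then show "B (c *\<^sub>C x) = c *\<^sub>C B x" using lim[of "c *\<^sub>C x"] LIMSEQ_unique by blast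
next
  fix x
  have "norm (B x) = norm (F N x - (F N x - B x))" by simp
  also have "\<dots> \<le> norm (F N x) + norm (F N x - B x)" by (rule norm_triangle_ineq4)
  also have "\<dots> \<le> onorm (F N) * norm x + 1 * norm x"
    using close[of x] by (intro add_mono norm_bop_le[OF F]) simp_all
  finally show "norm (B x) \<le> (onorm (F N) + 1) * norm x" by (simp add: algebra_simps)
qed

lemma bop_Cauchy_limit_exists:
  fixes F :: "nat \<Rightarrow> 'a::{complex_normed_vector, complete_space} \<Rightarrow> 'a"
  assumes F: "\<And>n. bop (F n)"
    and Cauchy: "\<And>e. 0 < e \<Longrightarrow> \<exists>N. \<forall>m\<ge>N. \<forall>n\<ge>N. \<forall>x. norm (F m x - F n x) \<le> e * norm x"
  shows "\<exists>B. bop B \<and> (\<lambda>n. onorm (\<lambda>x. F n x - B x)) \<longlonglongrightarrow> 0"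
proof -
  have "Cauchy (\<lambda>n. F n x)" for x
  proof (rule metric_CauchyI)
    fix e :: real assume "0 < e"
    then obtain N where N: "\<And>m n. m \<ge> N \<Longrightarrow> n \<ge> N \<Longrightarrow> norm (F m x - F n x) \<le> e / (norm x + 1) * norm x"
      using Cauchy[of "e / (norm x + 1)"] by (auto simp: add_nonneg_pos)
    have "e / (norm x + 1) * norm x < e / (norm x + 1) * (norm x + 1)"
      using \<open>0 < e\<close> by (intro mult_strict_left_mono) (simp_all add: add_nonneg_pos)
    moreover have "0 < norm x + 1" by (simp add: add_nonneg_pos)
    ultimately have "e / (norm x + 1) * norm x < e" by simp
    then have "dist (F m x) (F n x) < e" if "m \<ge> N" "n \<ge> N" for m n
      using N[OF that] by (simp add: dist_norm)
    then show "\<exists>N. \<forall>m\<ge>N. \<forall>n\<ge>N. dist (F m x) (F n x) < e" by blast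
  qed
  define B where "B x = lim (\<lambda>n. F n x)" for x
  have lim: "(\<lambda>n. F n x) \<longlonglongrightarrow> B x" for x
    using \<open>\<And>x. Cauchy (\<lambda>n. F n x)\<close> by (simp add: B_def Cauchy_convergent_iff convergent_LIMSEQ_iff)
  have close: "\<exists>N. \<forall>n\<ge>N. \<forall>x. norm (F n x - B x) \<le> e * norm x" if "0 < e" for e
  proof -
    obtain N where N: "\<And>m n x. m \<ge> N \<Longrightarrow> n \<ge> N \<Longrightarrow> norm (F n x - F m x) \<le> e * norm x"
      using Cauchy[OF \<open>0 < e\<close>] by blast
    have "norm (F n x - B x) \<le> e * norm x" if "n \<ge> N" for n x
      using N[OF _ that, of _ x]
      by (intro LIMSEQ_le_const2[OF tendsto_norm[OF tendsto_diff[OF tendsto_const lim]]]) auto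
    then show ?thesis by blast
  qed
  obtain N where N: "\<And>x. norm (F N x - B x) \<le> 1 * norm x" using close[of 1] by auto
  have "bop B" by (rule bop_pointwise_limit[OF F lim, of N]) (use N in simp)
  then show ?thesis using onorm_diff_tendsto_zeroI[OF F _ close] by blast
qed

definition poly_approximants :: "real \<Rightarrow> (nat \<Rightarrow> real poly) \<Rightarrow> (real \<Rightarrow> real) \<Rightarrow> bool" where
  "poly_approximants M P f \<longleftrightarrow> uniform_limit {0..M} (\<lambda>n s. poly (P n) s) f sequentially"

lemma poly_approximantsD:
  assumes "poly_approximants M P f" "0 < e"
  shows "\<exists>N. \<forall>n\<ge>N. \<forall>s\<in>{0..M}. \<bar>poly (P n) s - f s\<bar> < e"
  using uniform_limitD[OF assms(1)[unfolded poly_approximants_def] assms(2)]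
  by (simp add: eventually_sequentially dist_real_def)

lemma poly_approximantsI:
  assumes "\<And>e. 0 < e \<Longrightarrow> \<exists>N. \<forall>n\<ge>N. \<forall>s\<in>{0..M}. \<bar>poly (P n) s - f s\<bar> < e"
  shows "poly_approximants M P f"
  unfolding poly_approximants_def
  by (rule uniform_limitI) (use assms in \<open>simp add: eventually_sequentially dist_real_def\<close>)

lemma poly_approximants_exist:
  assumes "continuous_on {0..M} f"
  shows "\<exists>P. poly_approximants M P f"
proof -
  have "\<exists>p. \<forall>s\<in>{0..M}. \<bar>f s - poly p s\<bar> < 1 / Suc n" for n
  proof -
    obtain g where g: "real_polynomial_function g" "\<And>s. s \<in> {0..M} \<Longrightarrow> \<bar>f s - g s\<bar> < 1 / Suc n"
      using Stone_Weierstrass_real_polynomial_function[OF compact_Icc assms, of "1 / Suc n"] by auto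
    obtain a k where "g = (\<lambda>x. \<Sum>i\<le>k. a i * x ^ i)"
      using g(1) real_polynomial_function_iff_sum by blast
    then have "poly (\<Sum>i\<le>k. monom (a i) i) s = g s" for s by (simp add: poly_sum poly_monom)
    then show ?thesis using g(2) by (intro exI[of _ "\<Sum>i\<le>k. monom (a i) i"]) simp
  qed
  then obtain P where P: "\<And>n s. s \<in> {0..M} \<Longrightarrow> \<bar>f s - poly (P n) s\<bar> < 1 / Suc n" by metis
  have "poly_approximants M P f"
  proof (rule poly_approximantsI)
    fix e :: real assume "0 < e"
    then obtain N :: nat where "1 / e < N" using reals_Archimedean2 by blast
    then have "1 / Suc N < e" using \<open>0 < e\<close> by (simp add: field_simps)
    have "\<bar>poly (P n) s - f s\<bar> < e" if "N \<le> n" "s \<in> {0..M}" for n s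
    proof -
      have "1 / Suc n \<le> 1 / Suc N" using \<open>N \<le> n\<close> by (simp add: frac_le)
      then show ?thesis using P[OF \<open>s \<in> {0..M}\<close>, of n] \<open>1 / Suc N < e\<close> by simp
    qed
    then show "\<exists>N. \<forall>n\<ge>N. \<forall>s\<in>{0..M}. \<bar>poly (P n) s - f s\<bar> < e" by blast
  qed
  then show ?thesis by blast
qed

lemma poly_op_uniformly_close:
  fixes A :: "'a::chilbert_space \<Rightarrow> 'a"
  assumes P: "posop A" and Q: "poly_approximants (onorm A) Q f" "poly_approximants (onorm A) Q' f"
    and "0 < e"
  shows "\<exists>N. \<forall>n\<ge>N. \<forall>m\<ge>N. \<forall>x. norm (poly_op A (Q n) x - poly_op A (Q' m) x) \<le> e * norm x"
proof -
  have "0 < e / 2" using \<open>0 < e\<close> by simp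
  obtain N1 where N1: "\<And>n s. n \<ge> N1 \<Longrightarrow> s \<in> {0..onorm A} \<Longrightarrow> \<bar>poly (Q n) s - f s\<bar> < e / 2"
    using poly_approximantsD[OF Q(1) \<open>0 < e / 2\<close>] by blast
  obtain N2 where N2: "\<And>n s. n \<ge> N2 \<Longrightarrow> s \<in> {0..onorm A} \<Longrightarrow> \<bar>poly (Q' n) s - f s\<bar> < e / 2"
    using poly_approximantsD[OF Q(2) \<open>0 < e / 2\<close>] by blast
  have "norm (poly_op A (Q n) x - poly_op A (Q' m) x) \<le> e * norm x"
    if "n \<ge> max N1 N2" "m \<ge> max N1 N2" for n m x
    unfolding poly_op_diff[OF posop_bop[OF P], symmetric]
  proof (rule norm_poly_op_le[OF P])
    fix s assume "s \<in> {0..onorm A}"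
    then have "\<bar>poly (Q n) s - f s\<bar> < e / 2" "\<bar>poly (Q' m) s - f s\<bar> < e / 2"
      using N1[of n s] N2[of m s] that by auto
    then show "\<bar>poly (Q n - Q' m) s\<bar> \<le> e" unfolding poly_diff by linarith
  qed
  then show ?thesis by blast
qed

definition is_cfc :: "('a::complex_normed_vector \<Rightarrow> 'a) \<Rightarrow> (real \<Rightarrow> real) \<Rightarrow> ('a \<Rightarrow> 'a) \<Rightarrow> bool" where
  "is_cfc A f B \<longleftrightarrow> bop B \<and>
     (\<forall>P. poly_approximants (onorm A) P f \<longrightarrow> (\<lambda>n. onorm (\<lambda>v. poly_op A (P n) v - B v)) \<longlonglongrightarrow> 0)"

context
  fixes A :: "'a::chilbert_space \<Rightarrow> 'a" and f :: "real \<Rightarrow> real" and P0 :: "nat \<Rightarrow> real poly"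
  assumes P: "posop A" and P0: "poly_approximants (onorm A) P0 f"
begin

lemma is_cfc_of_onorm_limit:
  assumes B: "bop B" and P0_B: "(\<lambda>n. onorm (\<lambda>v. poly_op A (P0 n) v - B v)) \<longlonglongrightarrow> 0"
  shows "is_cfc A f B"
  unfolding is_cfc_def
proof (intro conjI allI impI B)
  have A: "bop A" using P by (rule posop_bop)
  fix Q assume Q: "poly_approximants (onorm A) Q f"
  show "(\<lambda>n. onorm (\<lambda>v. poly_op A (Q n) v - B v)) \<longlonglongrightarrow> 0"
  proof (rule onorm_diff_tendsto_zeroI[OF bop_poly_op[OF A] B])
    fix e :: real assume "0 < e"
    then have "0 < e / 2" by simp
    obtain N1 where N1: "\<And>n m x. n \<ge> N1 \<Longrightarrow> m \<ge> N1 \<Longrightarrow>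
        norm (poly_op A (Q n) x - poly_op A (P0 m) x) \<le> e / 2 * norm x"
      using poly_op_uniformly_close[OF P Q P0 \<open>0 < e / 2\<close>] by blast
    obtain N2 where N2: "\<And>n x. n \<ge> N2 \<Longrightarrow> norm (poly_op A (P0 n) x - B x) \<le> e / 2 * norm x"
      using onorm_diff_tendsto_zeroD[OF bop_poly_op[OF A] B P0_B \<open>0 < e / 2\<close>] by blast
    have "norm (poly_op A (Q n) x - B x) \<le> e * norm x" if "n \<ge> max N1 N2" for n x
      using norm_triangle_le[OF add_mono[OF N1[of n "max N1 N2" x] N2[of "max N1 N2" x]]] that
      by (simp add: field_simps)
    then show "\<exists>N. \<forall>n\<ge>N. \<forall>x. norm (poly_op A (Q n) x - B x) \<le> e * norm x" by blast
  qed
qed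

lemma is_cfc_tendsto:
  assumes "is_cfc A f B" shows "(\<lambda>n. poly_op A (P0 n) x) \<longlonglongrightarrow> B x"
  using assms P0 bop_poly_op[OF posop_bop[OF P]]
  by (intro tendsto_of_onorm_diff_tendsto_zero[where F="\<lambda>n. poly_op A (P0 n)"]) (auto simp: is_cfc_def)

end

lemma ex1_is_cfc:
  fixes A :: "'a::chilbert_space \<Rightarrow> 'a"
  assumes P: "posop A" and f: "continuous_on {0..onorm A} f"
  shows "\<exists>!B. is_cfc A f B"
proof -
  obtain P0 where P0: "poly_approximants (onorm A) P0 f" using poly_approximants_exist[OF f] by blast
  obtain B where "bop B" "(\<lambda>n. onorm (\<lambda>v. poly_op A (P0 n) v - B v)) \<longlonglongrightarrow> 0"
    using bop_Cauchy_limit_exists[of "\<lambda>n. poly_op A (P0 n)"]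
      poly_op_uniformly_close[OF P P0 P0] bop_poly_op[OF posop_bop[OF P]] by blast
  then have "is_cfc A f B" by (rule is_cfc_of_onorm_limit[OF P P0])
  moreover have "B' = B" if "is_cfc A f B'" for B'
    using LIMSEQ_unique[OF is_cfc_tendsto[OF P P0 that] is_cfc_tendsto[OF P P0 \<open>is_cfc A f B\<close>]]
    by blast
  ultimately show ?thesis by blast
qed

context
  fixes A :: "'a::chilbert_space \<Rightarrow> 'a" and f :: "real \<Rightarrow> real"
  assumes P: "posop A" and f: "continuous_on {0..onorm A} f"
begin

lemma is_cfc_cfc: "is_cfc A f (cfc A f)"
proof -
  have "cfc A f = (THE B. is_cfc A f B)" unfolding cfc_def is_cfc_def poly_approximants_def ..
  then show ?thesis using theI'[OF ex1_is_cfc[OF P f]] by simp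
qed

lemma bop_cfc: "bop (cfc A f)"
  using is_cfc_cfc by (simp add: is_cfc_def)

lemma cfc_tendsto:
  assumes "poly_approximants (onorm A) Q f"
  shows "(\<lambda>n. poly_op A (Q n) x) \<longlonglongrightarrow> cfc A f x"
  using is_cfc_cfc assms bop_poly_op[OF posop_bop[OF P]] bop_cfc
  by (intro tendsto_of_onorm_diff_tendsto_zero[where F="\<lambda>n. poly_op A (Q n)"]) (auto simp: is_cfc_def)

end

section \<open>Properties of the functional calculus\<close>

lemma poly_approximants_const: "poly_approximants M (\<lambda>n. p) (poly p)"
  by (rule poly_approximantsI) auto

lemma poly_approximants_affine:
  assumes Q: "poly_approximants M Q f"
  shows "poly_approximants M (\<lambda>n. smult a (Q n) + [:b:]) (\<lambda>s. a * f s + b)"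
proof (rule poly_approximantsI)
  fix e :: real assume "0 < e"
  then have "0 < e / (\<bar>a\<bar> + 1)" by (simp add: add_nonneg_pos)
  then obtain N where N: "\<And>n s. n \<ge> N \<Longrightarrow> s \<in> {0..M} \<Longrightarrow> \<bar>poly (Q n) s - f s\<bar> < e / (\<bar>a\<bar> + 1)"
    using poly_approximantsD[OF Q] by blast
  have "\<bar>poly (smult a (Q n) + [:b:]) s - (a * f s + b)\<bar> < e" if "n \<ge> N" "s \<in> {0..M}" for n s
  proof -
    have "\<bar>poly (smult a (Q n) + [:b:]) s - (a * f s + b)\<bar> = \<bar>a\<bar> * \<bar>poly (Q n) s - f s\<bar>"
      by (simp add: abs_mult[symmetric] algebra_simps)
    also have "\<dots> \<le> (\<bar>a\<bar> + 1) * \<bar>poly (Q n) s - f s\<bar>" by (simp add: mult_right_mono)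
    also have "\<dots> < (\<bar>a\<bar> + 1) * (e / (\<bar>a\<bar> + 1))"
      using N[OF that] by (intro mult_strict_left_mono) (simp_all add: add_nonneg_pos)
    finally show ?thesis by (simp add: add_nonneg_pos)
  qed
  then show "\<exists>N. \<forall>n\<ge>N. \<forall>s\<in>{0..M}. \<bar>poly (smult a (Q n) + [:b:]) s - (a * f s + b)\<bar> < e"
    by blast
qed

lemma poly_approximants_mult:
  assumes "poly_approximants M Q f" "poly_approximants M R g"
    and "continuous_on {0..M} f" "continuous_on {0..M} g"
  shows "poly_approximants M (\<lambda>n. Q n * R n) (\<lambda>s. f s * g s)"
proof -
  have "bounded (f ` {0..M})" "bounded (g ` {0..M})"
    using assms(3,4) by (auto intro: compact_imp_bounded compact_continuous_image)
  then have "uniform_limit {0..M} (\<lambda>n s. poly (Q n) s * poly (R n) s) (\<lambda>s. f s * g s) sequentially"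
    using assms(1,2) unfolding poly_approximants_def by (intro uniform_lim_mult)
  moreover have "(\<lambda>n. poly (Q n * R n)) = (\<lambda>n s. poly (Q n) s * poly (R n) s)"
    by (simp add: fun_eq_iff)
  ultimately show ?thesis unfolding poly_approximants_def by simp
qed

lemma bounded_on_Icc:
  fixes f :: "real \<Rightarrow> real"
  assumes "continuous_on {0..M} f" shows "\<exists>c. \<forall>s\<in>{0..M}. \<bar>f s\<bar> \<le> c"
proof -
  have "bounded (f ` {0..M})" using assms by (auto intro: compact_imp_bounded compact_continuous_image)
  then show ?thesis by (auto simp: bounded_iff)
qed

context
  fixes A :: "'a::chilbert_space \<Rightarrow> 'a"
  assumes P: "posop A"
begin

lemma cfc_poly: "cfc A (poly p) = poly_op A p"
proof
  fix x
  have "(\<lambda>n. poly_op A p x) \<longlonglongrightarrow> cfc A (poly p) x"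
    by (rule cfc_tendsto[OF P _ poly_approximants_const]) (intro continuous_intros)
  then show "cfc A (poly p) x = poly_op A p x" using LIMSEQ_unique tendsto_const by blast
qed

lemma cfc_cong:
  assumes "\<And>s. s \<in> {0..onorm A} \<Longrightarrow> f s = g s"
  shows "cfc A f = cfc A g"
proof -
  have "\<And>P. uniform_limit {0..onorm A} (\<lambda>n s. poly (P n) s) f sequentially =
            uniform_limit {0..onorm A} (\<lambda>n s. poly (P n) s) g sequentially"
    using assms by (intro uniform_limit_cong') auto
  then show ?thesis unfolding cfc_def by simp
qed

lemma cfc_id: "cfc A (\<lambda>s. s) = A"
proof -
  have "cfc A (\<lambda>s. s) = cfc A (poly [:0, 1:])" by (rule cfc_cong) simp
  then show ?thesis by (simp add: cfc_poly fun_eq_iff poly_op_X[OF posop_bop[OF P]])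
qed

lemma cfc_one: "cfc A (\<lambda>s. 1) = (\<lambda>x. x)"
proof -
  have "cfc A (\<lambda>s. 1) = cfc A (poly [:1:])" by (rule cfc_cong) simp
  then show ?thesis by (simp add: cfc_poly fun_eq_iff poly_op_const)
qed

context
  fixes f :: "real \<Rightarrow> real"
  assumes f: "continuous_on {0..onorm A} f"
begin

lemma norm_cfc_le:
  assumes bound: "\<And>s. s \<in> {0..onorm A} \<Longrightarrow> \<bar>f s\<bar> \<le> c"
  shows "norm (cfc A f x) \<le> c * norm x"
proof (rule le_of_forall_pos_le_add_mult[where b = "norm x"])
  fix e :: real assume "0 < e"
  obtain Q where Q: "poly_approximants (onorm A) Q f" using poly_approximants_exist[OF f] by blast
  obtain N where N: "\<And>n s. n \<ge> N \<Longrightarrow> s \<in> {0..onorm A} \<Longrightarrow> \<bar>poly (Q n) s - f s\<bar> < e"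
    using poly_approximantsD[OF Q \<open>0 < e\<close>] by blast
  have "norm (poly_op A (Q n) x) \<le> (c + e) * norm x" if "n \<ge> N" for n
  proof (rule norm_poly_op_le[OF P])
    fix s assume "s \<in> {0..onorm A}"
    then show "\<bar>poly (Q n) s\<bar> \<le> c + e" using N[OF that] bound by fastforce
  qed
  moreover have "(\<lambda>n. norm (poly_op A (Q n) x)) \<longlonglongrightarrow> norm (cfc A f x)"
    by (intro tendsto_norm cfc_tendsto[OF P f Q])
  ultimately show "norm (cfc A f x) \<le> c * norm x + e * norm x"
    by (intro LIMSEQ_le_const2) (auto simp: algebra_simps)
qed

lemma selfadj_cfc: "selfadj (cfc A f)"
  unfolding selfadj_def
proof (intro conjI allI)
  show "bop (cfc A f)" by (rule bop_cfc[OF P f])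
  fix x y
  obtain Q where Q: "poly_approximants (onorm A) Q f" using poly_approximants_exist[OF f] by blast
  have "(\<lambda>n. cinner (poly_op A (Q n) x) y) \<longlonglongrightarrow> cinner (cfc A f x) y"
    by (intro tendsto_cinner_left cfc_tendsto[OF P f Q])
  moreover have "(\<lambda>n. cinner x (poly_op A (Q n) y)) \<longlonglongrightarrow> cinner x (cfc A f y)"
    by (intro tendsto_cinner_right cfc_tendsto[OF P f Q])
  moreover have "cinner (poly_op A (Q n) x) y = cinner x (poly_op A (Q n) y)" for n
    by (rule selfadj_cinner[OF selfadj_poly_op[OF posop_selfadj[OF P]]])
  ultimately show "cinner (cfc A f x) y = cinner x (cfc A f y)"
    using LIMSEQ_unique by force
qed

lemma posop_cfc:
  assumes nonneg: "\<And>s. s \<in> {0..onorm A} \<Longrightarrow> 0 \<le> f s"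
  shows "posop (cfc A f)"
  unfolding posop_def
proof (intro conjI allI selfadj_cfc)
  fix x
  show "0 \<le> Re (cinner (cfc A f x) x)"
  proof (rule le_of_forall_pos_le_add_mult[where b = "(norm x)\<^sup>2"])
    fix e :: real assume "0 < e"
    obtain Q where Q: "poly_approximants (onorm A) Q f" using poly_approximants_exist[OF f] by blast
    obtain N where N: "\<And>n s. n \<ge> N \<Longrightarrow> s \<in> {0..onorm A} \<Longrightarrow> \<bar>poly (Q n) s - f s\<bar> < e"
      using poly_approximantsD[OF Q \<open>0 < e\<close>] by blast
    have "0 \<le> Re (cinner (poly_op A (Q n) x) x) + e * (norm x)\<^sup>2" if "n \<ge> N" for n
    proof -
      have "0 \<le> Re (cinner (poly_op A (Q n + [:e:]) x) x)"
      proof (rule poly_op_nonneg[OF P])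
        fix s assume "s \<in> {0..onorm A}"
        then show "0 \<le> poly (Q n + [:e:]) s" using N[OF that] nonneg by fastforce
      qed
      then show ?thesis
        by (simp add: poly_op_add[OF posop_bop[OF P]] poly_op_const cinner_add_left
            cinner_scaleC_left cinner_self_Re)
    qed
    moreover have "(\<lambda>n. Re (cinner (poly_op A (Q n) x) x) + e * (norm x)\<^sup>2)
        \<longlonglongrightarrow> Re (cinner (cfc A f x) x) + e * (norm x)\<^sup>2"
      by (intro tendsto_intros tendsto_Re tendsto_cinner_left cfc_tendsto[OF P f Q])
    ultimately show "0 \<le> Re (cinner (cfc A f x) x) + e * (norm x)\<^sup>2"
      by (intro LIMSEQ_le_const) auto
  qed
qed

lemma cfc_affine:
  "cfc A (\<lambda>s. a * f s + b) x = complex_of_real a *\<^sub>C cfc A f x + complex_of_real b *\<^sub>C x"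
proof -
  obtain Q where Q: "poly_approximants (onorm A) Q f" using poly_approximants_exist[OF f] by blast
  have "(\<lambda>n. poly_op A (smult a (Q n) + [:b:]) x) \<longlonglongrightarrow> cfc A (\<lambda>s. a * f s + b) x"
    by (intro cfc_tendsto[OF P _ poly_approximants_affine[OF Q]] continuous_intros f)
  moreover have "poly_op A (smult a (Q n) + [:b:]) x
      = complex_of_real a *\<^sub>C poly_op A (Q n) x + complex_of_real b *\<^sub>C x" for n
    by (simp add: poly_op_add[OF posop_bop[OF P]] poly_op_smult[OF posop_bop[OF P]] poly_op_const)
  moreover have "(\<lambda>n. complex_of_real a *\<^sub>C poly_op A (Q n) x + complex_of_real b *\<^sub>C x)
      \<longlonglongrightarrow> complex_of_real a *\<^sub>C cfc A f x + complex_of_real b *\<^sub>C x"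
    by (intro tendsto_add tendsto_const bop_tendsto[OF bop_scaleC_fun[OF bop_id]] cfc_tendsto[OF P f Q])
  ultimately show ?thesis using LIMSEQ_unique by auto
qed

lemma cfc_kernel:
  assumes "A z = 0" shows "cfc A f z = complex_of_real (f 0) *\<^sub>C z"
proof -
  obtain Q where Q: "poly_approximants (onorm A) Q f" using poly_approximants_exist[OF f] by blast
  have "0 \<in> {0..onorm A}" using onorm_bop_nonneg[OF posop_bop[OF P]] by simp
  then have "(\<lambda>n. poly (Q n) 0) \<longlonglongrightarrow> f 0"
    by (rule tendsto_uniform_limitI[OF Q[unfolded poly_approximants_def]])
  then have "(\<lambda>n. complex_of_real (poly (Q n) 0) *\<^sub>C z) \<longlonglongrightarrow> complex_of_real (f 0) *\<^sub>C z"
    by (intro tendsto_scaleC_left tendsto_of_real)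
  moreover have "poly_op A p z = complex_of_real (poly p 0) *\<^sub>C z" for p
    by (induction p) (simp_all add: poly_op_pCons[OF posop_bop[OF P]] bop_scaleC[OF posop_bop[OF P]] assms)
  ultimately show ?thesis using cfc_tendsto[OF P f Q, of z] LIMSEQ_unique by auto
qed

end

lemma cfc_mult:
  assumes f: "continuous_on {0..onorm A} f" and g: "continuous_on {0..onorm A} g"
  shows "cfc A (\<lambda>s. f s * g s) x = cfc A f (cfc A g x)"
proof -
  have A: "bop A" using P by (rule posop_bop)
  obtain Q where Q: "poly_approximants (onorm A) Q f" using poly_approximants_exist[OF f] by blast
  obtain R where R: "poly_approximants (onorm A) R g" using poly_approximants_exist[OF g] by blast
  obtain c where c: "\<And>s. s \<in> {0..onorm A} \<Longrightarrow> \<bar>f s\<bar> \<le> c" using bounded_on_Icc[OF f] by blast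
  obtain N where N: "\<And>n s. n \<ge> N \<Longrightarrow> s \<in> {0..onorm A} \<Longrightarrow> \<bar>poly (Q n) s - f s\<bar> < 1"
    using poly_approximantsD[OF Q zero_less_one] by blast
  have Q_bounded: "norm (poly_op A (Q n) v) \<le> (c + 1) * norm v" if "n \<ge> N" for n v
  proof (rule norm_poly_op_le[OF P])
    fix s assume "s \<in> {0..onorm A}"
    then show "\<bar>poly (Q n) s\<bar> \<le> c + 1" using N[OF that] c by fastforce
  qed
  \<comment> \<open>\<open>Q\<^sub>n(A) R\<^sub>n(A) x = Q\<^sub>n(A) (R\<^sub>n(A) x - g(A) x) + Q\<^sub>n(A) g(A) x\<close>, and the \<open>Q\<^sub>n(A)\<close> are uniformly bounded\<close>
  have "(\<lambda>n. poly_op A (Q n) (poly_op A (R n) x - cfc A g x)) \<longlonglongrightarrow> 0"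
  proof (rule Lim_null_comparison)
    show "\<forall>\<^sub>F n in sequentially. norm (poly_op A (Q n) (poly_op A (R n) x - cfc A g x))
        \<le> (c + 1) * norm (poly_op A (R n) x - cfc A g x)"
      unfolding eventually_sequentially using Q_bounded by blast
    have "(\<lambda>n. poly_op A (R n) x - cfc A g x) \<longlonglongrightarrow> 0"
      using cfc_tendsto[OF P g R] by (simp add: LIM_zero_iff)
    then show "(\<lambda>n. (c + 1) * norm (poly_op A (R n) x - cfc A g x)) \<longlonglongrightarrow> 0"
      by (intro tendsto_mult_right_zero tendsto_norm_zero)
  qed
  then have "(\<lambda>n. poly_op A (Q n) (poly_op A (R n) x - cfc A g x) + poly_op A (Q n) (cfc A g x))
      \<longlonglongrightarrow> 0 + cfc A f (cfc A g x)"
    by (intro tendsto_add cfc_tendsto[OF P f Q])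
  then have "(\<lambda>n. poly_op A (Q n * R n) x) \<longlonglongrightarrow> cfc A f (cfc A g x)"
    by (simp add: poly_op_mult[OF A] bop_diff[OF bop_poly_op[OF A]])
  moreover have "(\<lambda>n. poly_op A (Q n * R n) x) \<longlonglongrightarrow> cfc A (\<lambda>s. f s * g s) x"
    by (intro cfc_tendsto[OF P _ poly_approximants_mult[OF Q R f g]] continuous_intros f g)
  ultimately show ?thesis by (rule LIMSEQ_unique[symmetric])
qed

end

section \<open>Powers, absolute value and polar decomposition\<close>

lemma continuous_on_rpow: "0 \<le> a \<Longrightarrow> continuous_on {0..M} (rpow a)"
  unfolding rpow_def by (cases "a = 0") (auto intro!: continuous_intros continuous_on_powr')

lemma rpow_nonneg: "0 \<le> rpow a s"
  by (simp add: rpow_def)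

lemma rpow_mult_rpow: "0 \<le> a \<Longrightarrow> 0 \<le> b \<Longrightarrow> rpow a s * rpow b s = rpow (a + b) s"
  by (auto simp: rpow_def powr_add)

lemma rpow_at_0: "0 < a \<Longrightarrow> rpow a 0 = 0"
  by (simp add: rpow_def)

context
  fixes X :: "'a::chilbert_space \<Rightarrow> 'a"
  assumes P: "posop X"
begin

lemma bop_opow: "0 \<le> a \<Longrightarrow> bop (opow X a)"
  unfolding opow_def by (intro bop_cfc P continuous_on_rpow)

lemma selfadj_opow: "0 \<le> a \<Longrightarrow> selfadj (opow X a)"
  unfolding opow_def by (intro selfadj_cfc P continuous_on_rpow)

lemma opow_opow: "0 \<le> a \<Longrightarrow> 0 \<le> b \<Longrightarrow> opow X a (opow X b x) = opow X (a + b) x"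
  unfolding opow_def
  by (simp add: cfc_mult[OF P continuous_on_rpow continuous_on_rpow, symmetric] rpow_mult_rpow)

lemma opow_1: "opow X 1 = X"
  unfolding opow_def using cfc_cong[OF P, of "rpow 1" "\<lambda>s. s"] by (simp add: rpow_def cfc_id[OF P])

lemma opow_0: "opow X 0 = (\<lambda>x. x)"
  unfolding opow_def using cfc_cong[OF P, of "rpow 0" "\<lambda>s. 1"] by (simp add: rpow_def cfc_one[OF P])

lemma opow_kernel: "0 < a \<Longrightarrow> X z = 0 \<Longrightarrow> opow X a z = 0"
  unfolding opow_def by (simp add: cfc_kernel[OF P] continuous_on_rpow rpow_at_0)

lemma Re_cinner_opow_double: "0 \<le> a \<Longrightarrow> Re (cinner (opow X (2 * a) x) x) = (norm (opow X a x))\<^sup>2"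
  using opow_opow[of a a x] selfadj_cinner[OF selfadj_opow, of a "opow X a x" x]
  by (simp add: cinner_self_Re)

end

lemma posop_adj_comp:
  fixes T :: "'a::chilbert_space \<Rightarrow> 'a"
  assumes T: "bop T" shows "posop (adj T \<circ> T)"
  unfolding posop_def selfadj_def
proof (intro conjI allI)
  show "bop (adj T \<circ> T)" using bop_comp[OF bop_adj[OF T] T] by (simp add: comp_def)
  fix x y
  show "cinner ((adj T \<circ> T) x) y = cinner x ((adj T \<circ> T) y)"
    by (simp add: cinner_adj_left[OF T] cinner_adj_right[OF T])
  show "0 \<le> Re (cinner ((adj T \<circ> T) x) x)"
    by (simp add: cinner_adj_left[OF T] cinner_commute[of x] cinner_self_Re)
qed

context
  fixes T :: "'a::chilbert_space \<Rightarrow> 'a"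
  assumes T: "bop T"
begin

lemma posop_absop: "posop (absop T)"
  unfolding absop_def by (intro posop_cfc posop_adj_comp T continuous_intros) auto

lemma absop_absop: "absop T (absop T x) = adj T (T x)"
proof -
  have "absop T (absop T x) = cfc (adj T \<circ> T) (\<lambda>s. sqrt s * sqrt s) x"
    unfolding absop_def by (rule cfc_mult[OF posop_adj_comp[OF T], symmetric]) (intro continuous_intros)+
  also have "cfc (adj T \<circ> T) (\<lambda>s. sqrt s * sqrt s) = cfc (adj T \<circ> T) (\<lambda>s. s)"
    by (rule cfc_cong[OF posop_adj_comp[OF T]]) simp
  finally show ?thesis by (simp add: cfc_id[OF posop_adj_comp[OF T]])
qed

lemma norm_absop: "norm (absop T x) = norm (T x)"
proof -
  have "cinner (absop T (absop T x)) x = cinner (absop T x) (absop T x)"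
    by (rule selfadj_cinner[OF posop_selfadj[OF posop_absop]])
  then have "(norm (absop T x))\<^sup>2 = Re (cinner (absop T (absop T x)) x)"
    by (simp only: cinner_self_Re)
  also have "\<dots> = (norm (T x))\<^sup>2"
    by (simp add: absop_absop cinner_adj_left[OF T] cinner_commute[of x] cinner_self_Re)
  finally show ?thesis by (simp add: power2_eq_iff_nonneg)
qed

lemma onorm_absop_le: "onorm (absop T) \<le> onorm T"
  by (rule onorm_bound) (simp_all add: norm_absop norm_bop_le[OF T] onorm_bop_nonneg[OF T])

end

lemma poly_op_intertwine:
  assumes X: "bop X" and Y: "bop Y" and U: "bop U" and iw: "\<And>v. Y (U v) = U (X v)"
  shows "poly_op Y q (U v) = U (poly_op X q v)"
  by (induction q arbitrary: v)
    (simp_all add: bop_zero[OF U] poly_op_pCons[OF X] poly_op_pCons[OF Y] iw bop_add[OF U] bop_scaleC[OF U])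

lemma poly_approximants_vanishing:
  assumes Q: "poly_approximants M Q f" and "0 \<le> M" "f 0 = 0"
  shows "poly_approximants M (\<lambda>n. Q n - [:poly (Q n) 0:]) f"
proof (rule poly_approximantsI)
  fix e :: real assume "0 < e"
  then have "0 < e / 2" by simp
  then obtain N where N: "\<And>n s. n \<ge> N \<Longrightarrow> s \<in> {0..M} \<Longrightarrow> \<bar>poly (Q n) s - f s\<bar> < e / 2"
    using poly_approximantsD[OF Q] by blast
  have "\<bar>poly (Q n - [:poly (Q n) 0:]) s - f s\<bar> < e" if "n \<ge> N" "s \<in> {0..M}" for n s
  proof -
    have "\<bar>poly (Q n) s - f s\<bar> < e / 2" "\<bar>poly (Q n) 0 - f 0\<bar> < e / 2"
      using N[OF that] N[OF that(1), of 0] \<open>0 \<le> M\<close> by auto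
    moreover have "poly (Q n - [:poly (Q n) 0:]) s - f s = (poly (Q n) s - f s) - (poly (Q n) 0 - f 0)"
      using \<open>f 0 = 0\<close> by simp
    ultimately show ?thesis using abs_triangle_ineq4[of "poly (Q n) s - f s" "poly (Q n) 0 - f 0"]
      by linarith
  qed
  then show "\<exists>N. \<forall>n\<ge>N. \<forall>s\<in>{0..M}. \<bar>poly (Q n - [:poly (Q n) 0:]) s - f s\<bar> < e" by blast
qed

text \<open>A polynomial vanishing at \<open>0\<close> has the form \<open>X q(X)\<close>, and \<open>Y q(Y) = U X q(X) U'\<close>
  by the intertwining relation; the hypothesis \<open>f 0 = 0\<close> lets us approximate by such polynomials.\<close>

lemma cfc_intertwine:
  fixes X Y U U' :: "'a::chilbert_space \<Rightarrow> 'a"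
  assumes PX: "posop X" and PY: "posop Y" and U: "bop U" and "onorm Y \<le> onorm X"
    and iw: "\<And>v. Y (U v) = U (X v)" and Y_eq: "\<And>x. Y x = U (X (U' x))"
    and f: "continuous_on {0..onorm X} f" and "f 0 = 0"
  shows "cfc Y f x = U (cfc X f (U' x))"
proof -
  have X: "bop X" and Y: "bop Y" using PX PY by (simp_all add: posop_bop)
  have factor: "poly_op Y ([:0,1:] * q) x = U (poly_op X ([:0,1:] * q) (U' x))" for q
  proof -
    have "poly_op Y ([:0,1:] * q) x = poly_op Y q (Y x)"
      by (simp only: mult.commute[of "[:0,1:]"] poly_op_mult[OF Y] poly_op_X[OF Y])
    also have "\<dots> = U (poly_op X q (X (U' x)))"
      by (simp only: Y_eq poly_op_intertwine[OF X Y U iw])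
    also have "\<dots> = U (poly_op X ([:0,1:] * q) (U' x))"
      by (simp only: mult.commute[of "[:0,1:]"] poly_op_mult[OF X] poly_op_X[OF X])
    finally show ?thesis .
  qed
  obtain Q where "poly_approximants (onorm X) Q f" using poly_approximants_exist[OF f] by blast
  then have Q: "poly_approximants (onorm X) (\<lambda>n. Q n - [:poly (Q n) 0:]) f"
    using onorm_bop_nonneg[OF X] \<open>f 0 = 0\<close> by (intro poly_approximants_vanishing)
  have "[:0,1:] dvd Q n - [:poly (Q n) 0:]" for n
    using poly_eq_0_iff_dvd[of "Q n - [:poly (Q n) 0:]" 0] by simp
  then have Q_factor: "poly_op Y (Q n - [:poly (Q n) 0:]) x = U (poly_op X (Q n - [:poly (Q n) 0:]) (U' x))" for n
    by (metis dvdE factor)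
  have sub: "{0..onorm Y} \<subseteq> {0..onorm X}" using \<open>onorm Y \<le> onorm X\<close> by auto
  have "(\<lambda>n. poly_op Y (Q n - [:poly (Q n) 0:]) x) \<longlonglongrightarrow> cfc Y f x"
    using Q uniform_limit_on_subset[OF _ sub] continuous_on_subset[OF f sub]
    by (intro cfc_tendsto[OF PY]) (auto simp: poly_approximants_def)
  moreover have "(\<lambda>n. U (poly_op X (Q n - [:poly (Q n) 0:]) (U' x))) \<longlonglongrightarrow> U (cfc X f (U' x))"
    by (intro bop_tendsto[OF U] cfc_tendsto[OF PX f Q])
  ultimately show ?thesis unfolding Q_factor by (rule LIMSEQ_unique)
qed

context
  fixes T U :: "'a::chilbert_space \<Rightarrow> 'a"
  assumes T: "bop T" and polar: "polar_decomp T U"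
begin

lemma bop_polar: "bop U"
  using polar by (simp add: polar_decomp_def partial_isometry_def)

lemma polar_decomp_apply: "T x = U (absop T x)"
  using polar by (simp add: polar_decomp_def fun_eq_iff)

lemma absop_eq_0_iff_polar: "absop T z = 0 \<longleftrightarrow> U z = 0"
proof -
  have "U z = 0 \<longleftrightarrow> T z = 0" using polar unfolding polar_decomp_def by blast
  then show ?thesis using norm_absop[OF T, of z] by (metis norm_eq_zero)
qed

lemma norm_polar_apply:
  "(\<And>z. U z = 0 \<Longrightarrow> cinner z y = 0) \<Longrightarrow> norm (U y) = norm y"
  using polar by (simp add: polar_decomp_def partial_isometry_def)

lemma cinner_ker_polar_absop: "U z = 0 \<Longrightarrow> cinner z (absop T v) = 0"
proof -
  assume "U z = 0"
  then have "absop T z = 0" by (simp add: absop_eq_0_iff_polar)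
  then show ?thesis using selfadj_cinner[OF posop_selfadj[OF posop_absop[OF T]], of z v] by simp
qed

lemma cinner_ker_polar_opow: "0 < a \<Longrightarrow> U z = 0 \<Longrightarrow> cinner z (opow (absop T) a v) = 0"
proof -
  assume "0 < a" "U z = 0"
  then have "absop T z = 0" by (simp add: absop_eq_0_iff_polar)
  then have "opow (absop T) a z = 0" by (rule opow_kernel[OF posop_absop[OF T] \<open>0 < a\<close>])
  then show ?thesis
    using selfadj_cinner[OF selfadj_opow[OF posop_absop[OF T]], of a z v] \<open>0 < a\<close> by simp
qed

lemma adj_polar_polar_apply:
  assumes perp: "\<And>z. U z = 0 \<Longrightarrow> cinner z y = 0"
  shows "adj U (U y) = y"
proof -
  have U: "bop U" by (rule bop_polar)
  define w where "w = adj U (U y) - y"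
  have perp_w: "cinner z w = 0" if "U z = 0" for z
    using that perp[OF that] by (simp add: w_def cinner_diff_right cinner_adj_right[OF U, symmetric])
  \<comment> \<open>\<open>U\<close> is isometric on \<open>(ker U)\<^sup>\<bottom>\<close>, hence preserves inner products there (polarisation)\<close>
  have Re_eq: "Re (s * cinner (U y) (U w)) = Re (s * cinner y w)" for s
  proof -
    have "norm (U (y + s *\<^sub>C w)) = norm (y + s *\<^sub>C w)"
      using perp perp_w by (intro norm_polar_apply) (simp add: cinner_add_right cinner_scaleC_right)
    then have "(norm (U (y + s *\<^sub>C w)))\<^sup>2 = (norm (y + s *\<^sub>C w))\<^sup>2" by simp
    moreover have "norm (U y) = norm y" "norm (U w) = norm w"
      using norm_polar_apply[OF perp] norm_polar_apply[OF perp_w] by auto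
    ultimately show ?thesis
      by (simp add: bop_add[OF U] bop_scaleC[OF U] norm_add_sq norm_scaleC cinner_scaleC_right)
  qed
  have "cinner (U y) (U w) = cinner y w"
    using Re_eq[of 1] Re_eq[of "\<i>"] by (simp add: complex_eq_iff)
  then have "cinner w w = 0" by (simp add: cinner_adj_left[OF U] w_def cinner_diff_left)
  then show ?thesis by (simp add: cinner_self_eq_0 w_def)
qed

lemma absop_adj_polar_polar: "absop T (adj U (U v)) = absop T v"
proof (rule cinner_ext)
  fix y
  have U: "bop U" by (rule bop_polar)
  have sa: "selfadj (absop T)" by (rule posop_selfadj[OF posop_absop[OF T]])
  have "cinner (absop T (adj U (U v))) y = cinner (U v) (U (absop T y))"
    by (simp add: selfadj_cinner[OF sa] cinner_adj_left[OF U])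
  also have "\<dots> = cinner v (absop T y)"
    by (simp add: cinner_adj_right[OF U] adj_polar_polar_apply cinner_ker_polar_absop)
  finally show "cinner (absop T (adj U (U v))) y = cinner (absop T v) y"
    by (simp add: selfadj_cinner[OF sa])
qed

lemma adj_polar_decomp: "adj T x = absop T (adj U x)"
proof -
  have "adj T = (\<lambda>x. absop T (adj U x))"
    by (rule adj_eqI[OF T]) (simp add: polar_decomp_apply cinner_adj_right[OF bop_polar]
        selfadj_cinner[OF posop_selfadj[OF posop_absop[OF T]]])
  then show ?thesis by simp
qed

lemma norm_adj_polar_le: "norm (adj U x) \<le> norm x"
proof -
  have U: "bop U" by (rule bop_polar)
  have "norm (U (adj U x)) = norm (adj U x)"
    by (rule norm_polar_apply) (simp add: cinner_adj_right[OF U, symmetric])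
  then have "(norm (adj U x))\<^sup>2 \<le> norm (adj U x) * norm x"
    using norm_cinner_le[of "U (adj U x)" x] complex_Re_le_cmod[of "cinner (U (adj U x)) x"]
    by (simp add: cinner_adj_right[OF U] cinner_self_Re)
  then show ?thesis by (cases "adj U x = 0") (auto simp: power2_eq_square)
qed

lemma onorm_polar_conj_le:
  assumes X: "bop X" and perp: "\<And>z v. U z = 0 \<Longrightarrow> cinner z (X v) = 0"
    and Y: "\<And>x. Y x = U (X (adj U x))"
  shows "onorm Y \<le> onorm X"
proof (rule onorm_bound)
  fix x
  have "norm (Y x) = norm (X (adj U x))" unfolding Y by (intro norm_polar_apply perp)
  also have "\<dots> \<le> onorm X * norm x"
    using norm_bop_le[OF X, of "adj U x"] norm_adj_polar_le[of x] onorm_bop_nonneg[OF X]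
    by (meson mult_left_mono order_trans)
  finally show "norm (Y x) \<le> onorm X * norm x" .
qed (rule onorm_bop_nonneg[OF X])

lemma absop_adj: "absop (adj T) x = U (absop T (adj U x))"
proof -
  have U: "bop U" by (rule bop_polar)
  have PA: "posop (adj T \<circ> T)" by (rule posop_adj_comp[OF T])
  have PA': "posop (adj (adj T) \<circ> adj T)" by (rule posop_adj_comp[OF bop_adj[OF T]])
  have A: "(adj T \<circ> T) v = absop T (absop T v)" for v by (simp add: absop_absop[OF T])
  have A'_eq: "(adj (adj T) \<circ> adj T) x = U ((adj T \<circ> T) (adj U x))" for x
    by (simp add: adj_adj[OF T] polar_decomp_apply adj_polar_decomp A absop_adj_polar_polar)
  have "cfc (adj (adj T) \<circ> adj T) sqrt x = U (cfc (adj T \<circ> T) sqrt (adj U x))"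
  proof (rule cfc_intertwine[OF PA PA' U _ _ A'_eq])
    show "onorm (adj (adj T) \<circ> adj T) \<le> onorm (adj T \<circ> T)"
      by (rule onorm_polar_conj_le[OF posop_bop[OF PA] _ A'_eq]) (simp only: A cinner_ker_polar_absop)
    show "(adj (adj T) \<circ> adj T) (U v) = U ((adj T \<circ> T) v)" for v
      by (simp only: A'_eq A absop_adj_polar_polar)
  qed (auto intro: continuous_intros)
  then show ?thesis unfolding absop_def .
qed

lemma opow_absop_adj:
  assumes "0 < a"
  shows "opow (absop (adj T)) a x = U (opow (absop T) a (adj U x))"
  unfolding opow_def
proof (rule cfc_intertwine[OF posop_absop[OF T] posop_absop[OF bop_adj[OF T]] bop_polar _ _ absop_adj])
  show "onorm (absop (adj T)) \<le> onorm (absop T)"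
    by (rule onorm_polar_conj_le[OF posop_bop[OF posop_absop[OF T]] cinner_ker_polar_absop absop_adj])
  show "absop (adj T) (U v) = U (absop T v)" for v
    by (simp add: absop_adj absop_adj_polar_polar)
qed (use assms in \<open>simp_all add: continuous_on_rpow rpow_at_0\<close>)

lemma norm_opow_absop_adj:
  "0 < a \<Longrightarrow> norm (opow (absop (adj T)) a x) = norm (opow (absop T) a (adj U x))"
  unfolding opow_absop_adj by (intro norm_polar_apply cinner_ker_polar_opow)

end

section \<open>The numerical radius inequality\<close>

lemma norm_cinner_le_of_norm_double_diff_le:
  fixes u a b :: "'a::complex_inner"
  assumes "0 \<le> K" and "norm (2 *\<^sub>R u - K *\<^sub>R a) \<le> K * norm a"
  shows "cmod (cinner u b) \<le> K / 2 * (norm a * norm b + cmod (cinner a b))"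
proof -
  have "2 * cinner u b = cinner (2 *\<^sub>R u - K *\<^sub>R a) b + of_real K * cinner a b"
    by (simp add: cinner_diff_left cinner_scaleR_left)
  then have "2 * cmod (cinner u b) \<le> cmod (cinner (2 *\<^sub>R u - K *\<^sub>R a) b) + K * cmod (cinner a b)"
    using \<open>0 \<le> K\<close> by (metis norm_mult norm_of_real abs_of_nonneg norm_triangle_ineq norm_numeral)
  also have "cmod (cinner (2 *\<^sub>R u - K *\<^sub>R a) b) \<le> K * norm a * norm b"
    using norm_cinner_le[of "2 *\<^sub>R u - K *\<^sub>R a" b] assms(2)
    by (meson mult_right_mono norm_ge_zero order_trans)
  finally show ?thesis by (simp add: algebra_simps)
qed

lemma rpow_le_powr:
  assumes "0 \<le> r" "r \<le> 1" "0 \<le> s" "s \<le> M" "0 < M"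
  shows "rpow r s \<le> M powr r"
  using assms by (cases "r = 0") (simp_all add: rpow_def powr_mono2)

lemma norm_double_opow_diff_le:
  fixes P :: "'a::chilbert_space \<Rightarrow> 'a"
  assumes P: "posop P" and "onorm P \<le> M" "0 < M" "0 \<le> r" "r \<le> 1"
  shows "norm (2 *\<^sub>R opow P r v - (M powr r) *\<^sub>R v) \<le> M powr r * norm v"
proof -
  have cont: "continuous_on {0..onorm P} (rpow r)" by (rule continuous_on_rpow) fact
  have "2 *\<^sub>R opow P r v - (M powr r) *\<^sub>R v = cfc P (\<lambda>s. 2 * rpow r s + - (M powr r)) v"
    unfolding opow_def cfc_affine[OF P cont]
    by (simp add: scaleC_of_real scaleC_minus_left flip: scaleC_of_real)
  also have "norm \<dots> \<le> M powr r * norm v"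
  proof (rule norm_cfc_le[OF P])
    show "continuous_on {0..onorm P} (\<lambda>s. 2 * rpow r s + - (M powr r))"
      by (intro continuous_intros cont)
    fix s assume "s \<in> {0..onorm P}"
    then have "rpow r s \<le> M powr r" using assms by (intro rpow_le_powr) auto
    then show "\<bar>2 * rpow r s + - (M powr r)\<bar> \<le> M powr r" using rpow_nonneg[of r s] by linarith
  qed
  finally show ?thesis .
qed

lemma INF_norm_diff_scaleC_sq:
  fixes a b :: "'a::complex_inner"
  defines "d \<equiv> INF c::complex. (norm (a - c *\<^sub>C b))\<^sup>2"
  shows "0 \<le> d" and "d \<le> (norm a)\<^sup>2" and "(cmod (cinner a b))\<^sup>2 \<le> (norm b)\<^sup>2 * ((norm a)\<^sup>2 - d)"
proof -
  have d_le: "d \<le> (norm (a - c *\<^sub>C b))\<^sup>2" for c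
    unfolding d_def by (rule cINF_lower) (auto intro: bdd_belowI[of _ 0])
  show "0 \<le> d" unfolding d_def by (rule cINF_greatest) auto
  show "d \<le> (norm a)\<^sup>2" using d_le[of 0] by simp
  show "(cmod (cinner a b))\<^sup>2 \<le> (norm b)\<^sup>2 * ((norm a)\<^sup>2 - d)"
  proof (cases "b = 0")
    case False
    then have "d \<le> (norm a)\<^sup>2 - (cmod (cinner a b))\<^sup>2 / (norm b)\<^sup>2"
      using d_le norm_diff_projection_sq[OF False, of a] by metis
    then show ?thesis using False by (simp add: field_simps)
  qed simp
qed

lemma mult_add_le_sq_add_sq_diff:
  fixes \<alpha> \<beta> \<beta>' \<gamma> d :: real
  assumes "0 \<le> \<alpha>" "0 \<le> \<beta>" "\<beta> \<le> \<beta>'" "0 \<le> d" "d \<le> \<alpha>\<^sup>2"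
    and "\<gamma>\<^sup>2 \<le> \<beta>\<^sup>2 * (\<alpha>\<^sup>2 - d)"
  shows "\<alpha> * \<beta> + \<gamma> \<le> \<alpha>\<^sup>2 + \<beta>'\<^sup>2 - \<beta>' / (2 * \<alpha>) * d"
proof (cases "\<alpha> = 0")
  case True
  \<comment> \<open>then \<open>\<beta>' / (2 * \<alpha>) = 0\<close> (division by zero), and \<open>\<gamma> \<le> 0\<close>\<close>
  then have "\<gamma>\<^sup>2 \<le> 0" using assms by simp
  then show ?thesis using True by simp
next
  case False
  then have "0 < \<alpha>" using assms(1) by simp
  define v where "v = sqrt (\<alpha>\<^sup>2 - d)"
  have "0 \<le> v" and d: "d = \<alpha>\<^sup>2 - v\<^sup>2" using assms(5) by (simp_all add: v_def)
  have "v \<le> \<alpha>" using assms(1,4) unfolding v_def by (intro real_le_lsqrt) auto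
  have "\<gamma>\<^sup>2 \<le> (\<beta> * v)\<^sup>2" using assms(6) unfolding d by (simp add: power_mult_distrib)
  then have "\<gamma> \<le> \<beta> * v"
    using \<open>0 \<le> v\<close> assms(2) by (meson abs_ge_self order_trans power2_le_iff_abs_le zero_le_mult_iff)
  then have "\<alpha> * \<beta> + \<gamma> \<le> \<beta>' * (\<alpha> + v)"
    using mult_right_mono[OF assms(3), of "\<alpha> + v"] \<open>0 \<le> v\<close> assms(1) by (simp add: algebra_simps)
  \<comment> \<open>the remaining gap, times \<open>2 \<alpha>\<close>, is the sum of squares \<open>2 \<alpha> (\<alpha> - \<beta>')\<^sup>2 + \<beta>' (\<alpha> - v)\<^sup>2\<close>\<close>
  moreover have "2 * \<alpha> * (\<alpha>\<^sup>2 + \<beta>'\<^sup>2 - \<beta>' / (2 * \<alpha>) * d - \<beta>' * (\<alpha> + v))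
      = 2 * \<alpha> * (\<alpha> - \<beta>')\<^sup>2 + \<beta>' * (\<alpha> - v)\<^sup>2"
    using \<open>0 < \<alpha>\<close> unfolding d by (simp add: field_simps power2_eq_square)
  moreover have "0 \<le> 2 * \<alpha> * (\<alpha> - \<beta>')\<^sup>2 + \<beta>' * (\<alpha> - v)\<^sup>2"
    using assms \<open>0 < \<alpha>\<close> by simp
  ultimately show ?thesis using \<open>0 < \<alpha>\<close> by (smt (verit) zero_le_mult_iff)
qed

context
  fixes T U :: "'a::chilbert_space \<Rightarrow> 'a"
  assumes T: "bop T" and polar: "polar_decomp T U"
begin

lemma cinner_polar_decomp_opow:
  assumes "0 \<le> t" "t \<le> 1"
  shows "cinner (T x) x = cinner (opow (absop T) (1 - t) (opow (absop T) (t/2) x))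
                                 (opow (absop T) (t/2) (adj U x))"
proof -
  have P: "posop (absop T)" by (rule posop_absop[OF T])
  have "absop T x = opow (absop T) (t/2) (opow (absop T) (1 - t) (opow (absop T) (t/2) x))"
    using assms by (simp add: opow_opow[OF P] opow_1[OF P])
  then show ?thesis
    using assms by (simp add: polar_decomp_apply[OF T polar] cinner_adj_right[OF bop_polar[OF T polar]]
        selfadj_cinner[OF selfadj_opow[OF P]])
qed

lemma norm_opow_adj_polar_le:
  assumes "0 \<le> a"
  shows "norm (opow (absop T) a (adj U x)) \<le> norm (opow (absop (adj T)) a x)"
proof (cases "a = 0")
  case True
  then show ?thesis
    using norm_adj_polar_le[OF T polar]
    by (simp add: opow_0[OF posop_absop[OF T]] opow_0[OF posop_absop[OF bop_adj[OF T]]])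
next
  case False
  then show ?thesis using assms norm_opow_absop_adj[OF T polar, of a x] by simp
qed

end

lemma norm_sq_opow_add_le_onorm:
  fixes P Q :: "'a::chilbert_space \<Rightarrow> 'a"
  assumes P: "posop P" and Q: "posop Q" and "0 \<le> t"
  shows "(norm (opow P (t/2) x))\<^sup>2 + (norm (opow Q (t/2) x))\<^sup>2
           \<le> onorm (\<lambda>v. opow P t v + opow Q t v) * (norm x)\<^sup>2"
proof -
  have "(norm (opow P (t/2) x))\<^sup>2 + (norm (opow Q (t/2) x))\<^sup>2 = Re (cinner (opow P t x + opow Q t x) x)"
    using Re_cinner_opow_double[OF P, of "t/2" x] Re_cinner_opow_double[OF Q, of "t/2" x] \<open>0 \<le> t\<close>
    by (simp add: cinner_add_left)
  also have "\<dots> \<le> onorm (\<lambda>v. opow P t v + opow Q t v) * (norm x)\<^sup>2"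
    using \<open>0 \<le> t\<close> by (intro Re_cinner_le_onorm bop_add_fun bop_opow P Q)
  finally show ?thesis .
qed

lemma norm_cinner_polar_le:
  fixes T U :: "'a::chilbert_space \<Rightarrow> 'a"
  assumes T: "bop T" "T \<noteq> (\<lambda>v. 0)" and polar: "polar_decomp T U"
    and t: "0 \<le> t" "t \<le> 1" and x: "norm x = 1"
  defines "a \<equiv> opow (absop T) (t/2) x" and "b \<equiv> opow (absop T) (t/2) (adj U x)"
    and "a' \<equiv> opow (absop (adj T)) (t/2) x"
  shows "cmod (cinner (T x) x) \<le> onorm T powr (1 - t) / 2 *
           (onorm (\<lambda>v. opow (absop T) t v + opow (absop (adj T)) t v)
            - norm a' / (2 * norm a) * (INF c::complex. (norm (a - c *\<^sub>C b))\<^sup>2))"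
proof -
  have P: "posop (absop T)" by (rule posop_absop[OF T(1)])
  have "0 < onorm T" using T onorm_pos_lt[OF bop_bounded_linear[OF T(1)]] by auto
  have "cmod (cinner (T x) x) \<le> onorm T powr (1 - t) / 2 * (norm a * norm b + cmod (cinner a b))"
    unfolding cinner_polar_decomp_opow[OF T(1) polar t] a_def b_def
    using t onorm_absop_le[OF T(1)] \<open>0 < onorm T\<close>
    by (intro norm_cinner_le_of_norm_double_diff_le norm_double_opow_diff_le[OF P]) auto
  also have "norm a * norm b + cmod (cinner a b)
      \<le> (norm a)\<^sup>2 + (norm a')\<^sup>2 - norm a' / (2 * norm a) * (INF c::complex. (norm (a - c *\<^sub>C b))\<^sup>2)"
    using INF_norm_diff_scaleC_sq[of a b] norm_opow_adj_polar_le[OF T(1) polar, of "t/2" x] t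
    by (intro mult_add_le_sq_add_sq_diff) (auto simp: a_def b_def a'_def mult.commute)
  also have "(norm a)\<^sup>2 + (norm a')\<^sup>2 \<le> onorm (\<lambda>v. opow (absop T) t v + opow (absop (adj T)) t v)"
    using norm_sq_opow_add_le_onorm[OF P posop_absop[OF bop_adj[OF T(1)]] t(1), of x] x
    by (simp add: a_def a'_def)
  finally show ?thesis by (simp add: mult_left_mono)
qed

theorem theorem2p12:
  fixes T U :: "'a::chilbert_space \<Rightarrow> 'a" and x :: "nat \<Rightarrow> 'a" and t L :: real
  assumes "bop T" and "T \<noteq> (\<lambda>v. 0)"
    and "polar_decomp T U"
    and "\<And>n. norm (x n) = 1"
    and "(\<lambda>n. cmod (cinner (T (x n)) (x n))) \<longlonglongrightarrow> numrad T"
    and "t \<in> {0..1}"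
    and "(\<lambda>n. norm (opow (absop (adj T)) (t/2) (x n)) / (2 * norm (opow (absop T) (t/2) (x n)))
            * (INF c::complex. (norm (opow (absop T) (t/2) (x n)
                 - c *\<^sub>C opow (absop T) (t/2) (adj U (x n))))\<^sup>2)) \<longlonglongrightarrow> L"
  shows "numrad T \<le> onorm T powr (1 - t) / 2 *
           (onorm (\<lambda>v. opow (absop T) t v + opow (absop (adj T)) t v) - L)
       \<and> onorm T powr (1 - t) / 2 *
           (onorm (\<lambda>v. opow (absop T) t v + opow (absop (adj T)) t v) - L)
         \<le> onorm T powr (1 - t) / 2 * onorm (\<lambda>v. opow (absop T) t v + opow (absop (adj T)) t v)"
proof
  let ?K = "onorm T powr (1 - t) / 2"
  let ?S = "onorm (\<lambda>v. opow (absop T) t v + opow (absop (adj T)) t v)"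
  let ?defect = "\<lambda>n. norm (opow (absop (adj T)) (t/2) (x n)) / (2 * norm (opow (absop T) (t/2) (x n)))
            * (INF c::complex. (norm (opow (absop T) (t/2) (x n)
                 - c *\<^sub>C opow (absop T) (t/2) (adj U (x n))))\<^sup>2)"
  have "(\<lambda>n. ?K * (?S - ?defect n)) \<longlonglongrightarrow> ?K * (?S - L)"
    by (intro tendsto_intros assms(7))
  then show "numrad T \<le> ?K * (?S - L)"
    using norm_cinner_polar_le[OF assms(1-3) _ _ assms(4)] assms(6)
    by (intro LIMSEQ_le[OF assms(5)]) auto
  have "0 \<le> ?defect n" for n
    using INF_norm_diff_scaleC_sq(1) by (intro mult_nonneg_nonneg divide_nonneg_nonneg) auto
  then have "0 \<le> L" by (intro LIMSEQ_le_const[OF assms(7)]) auto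
  then show "?K * (?S - L) \<le> ?K * ?S" by (simp add: mult_left_mono)
qed

end
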